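(* Assume $\mathsf{CH}$. Then there are a $P$-point ultrafilter $U$ on $\omega$ and a tight gap $\mathcal{G}$ such that the space $X_\mathcal{G}$ is $L$-selective but not $U$-selective.
   Context: A tight gap is a sequence $\mathcal{G}=\langle A_\alpha,B_\alpha:\alpha<\omega_1\rangle$ of infinite subsets of $\omega$ such that for all $\alpha<\beta$, $A_\alpha\subseteq^*A_\beta$, $B_\beta\subseteq^*B_\alpha$ and $A_\beta\subseteq^*B_\alpha$; if $E\subseteq^*B_\alpha$ for all $\alpha$ then $E\subseteq^*A_\beta$ for some $\beta$; and if $E\supseteq^*A_\alpha$ for all $\alpha$ then $E\supseteq^*B_\beta$ for some $\beta$ ($\subseteq^*$ is inclusion modulo finite). $X_\mathcal{G}$ is the space on $\omega\cup\{\infty\}$ with points of $\omega$ isolated and the neighborhood filter of $\infty$ generated by the sets $B_\alpha\cup\{\infty\}$. An ultrafilter $U$ on $\omega$ is a $P$-point if every function $\omega\rightarrow\omega$ is constant or finite-to-one on a set in $U$. $\mathcal{F}(X)$ is the set of nonempty closed subsets of $X$; $\varphi:Y\rightarrow\mathcal{F}(X)$ is lower semicontinuous if for every open $W\subseteq X$, $\{y:\varphi(y)\cap W\neq\emptyset\}$ is open. $X$ is $Y$-selective if every lower semicontinuous $\varphi:Y\rightarrow\mathcal{F}(X)$ has a continuous selection $s:Y\to X$ with $s(y)\in\varphi(y)$. $L$-selective means $(\omega+1)$-selective ($\omega+1$ a convergent sequence). $Y_U$ is the space on $\omega\cup\{\infty\}$ with points of $\omega$ isolated and neighborhoods of $\infty$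 the sets $A\cup\{\infty\}$, $A\in U$; $U$-selective means $Y_U$-selective. *)

theory Defs
  imports "HOL-Analysis.Analysis"
begin

abbreviation omega1 :: "(nat set \<times> nat set) set" where
  "omega1 \<equiv> cardSuc natLeq"

abbreviation olt :: "nat set \<Rightarrow> nat set \<Rightarrow> bool" where
  "olt a b \<equiv> (a, b) \<in> omega1 \<and> a \<noteq> b"

definition CH :: bool where
  "CH \<longleftrightarrow> (card_of (UNIV :: nat set set), omega1) \<in> ordIso"

definition almost_subset :: "nat set \<Rightarrow> nat set \<Rightarrow> bool" where
  "almost_subset A B \<longleftrightarrow> finite (A - B)"

definition tight_gap :: "(nat set \<Rightarrow> nat set) \<Rightarrow> (nat set \<Rightarrow> nat set) \<Rightarrow> bool" where
  "tight_gap A B \<longleftrightarrow>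
     (\<forall>a\<in>Field omega1. infinite (A a) \<and> infinite (B a)) \<and>
     (\<forall>a\<in>Field omega1. \<forall>b\<in>Field omega1. olt a b \<longrightarrow>
         almost_subset (A a) (A b) \<and> almost_subset (B b) (B a) \<and> almost_subset (A b) (B a)) \<and>
     (\<forall>E. (\<forall>a\<in>Field omega1. almost_subset E (B a)) \<longrightarrow>
          (\<exists>b\<in>Field omega1. almost_subset E (A b))) \<and>
     (\<forall>E. (\<forall>a\<in>Field omega1. almost_subset (A a) E) \<longrightarrow>
          (\<exists>b\<in>Field omega1. almost_subset (B b) E))"

text \<open>Points of omega are Some n, the point infinity is None.\<close>
definition gap_space :: "(nat set \<Rightarrow> nat set) \<Rightarrow> nat option topology" where
  "gap_space B = topology (\<lambda>V. None \<in> V \<longrightarrow>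
     (\<exists>F. finite F \<and> F \<noteq> {} \<and> F \<subseteq> Field omega1 \<and>
          (\<Inter>a\<in>F. insert None (Some ` B a)) \<subseteq> V))"

definition filter_space :: "nat set set \<Rightarrow> nat option topology" where
  "filter_space U = topology (\<lambda>V. None \<in> V \<longrightarrow> (\<exists>A\<in>U. insert None (Some ` A) \<subseteq> V))"

text \<open>omega+1: neighbourhoods of infinity are the cofinite sets.\<close>
definition conv_seq :: "nat option topology" where
  "conv_seq = filter_space {A. finite (- A)}"

definition ultrafilter_on_nat :: "nat set set \<Rightarrow> bool" where
  "ultrafilter_on_nat U \<longleftrightarrow> {} \<notin> U \<and> UNIV \<in> U \<and>
     (\<forall>A B. A \<in> U \<and> A \<subseteq> B \<longrightarrow> B \<in> U) \<and>
     (\<forall>A B. A \<in> U \<and> B \<in> U \<longrightarrow> A \<inter> B \<in> U) \<and>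
     (\<forall>A. A \<in> U \<or> - A \<in> U)"

definition free_ultrafilter_on_nat :: "nat set set \<Rightarrow> bool" where
  "free_ultrafilter_on_nat U \<longleftrightarrow> ultrafilter_on_nat U \<and> (\<forall>A\<in>U. infinite A)"

definition P_point :: "nat set set \<Rightarrow> bool" where
  "P_point U \<longleftrightarrow> free_ultrafilter_on_nat U \<and>
     (\<forall>f :: nat \<Rightarrow> nat. \<exists>A\<in>U. (\<exists>c. \<forall>n\<in>A. f n = c) \<or> (\<forall>m. finite {n\<in>A. f n = m}))"

definition lsc :: "'b topology \<Rightarrow> 'a topology \<Rightarrow> ('b \<Rightarrow> 'a set) \<Rightarrow> bool" where
  "lsc Y X \<phi> \<longleftrightarrow>
     (\<forall>y\<in>topspace Y. \<phi> y \<noteq> {} \<and> closedin X (\<phi> y)) \<and>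
     (\<forall>W. openin X W \<longrightarrow> openin Y {y \<in> topspace Y. \<phi> y \<inter> W \<noteq> {}})"

definition selective :: "'b topology \<Rightarrow> 'a topology \<Rightarrow> bool" where
  "selective Y X \<longleftrightarrow> (\<forall>\<phi>. lsc Y X \<phi> \<longrightarrow>
     (\<exists>s. continuous_map Y X s \<and> (\<forall>y\<in>topspace Y. s y \<in> \<phi> y)))"

end

(*
  CH enumerates all subsets of omega in order type omega1, so every requirement below can be met
  at some stage of a recursion of length omega1 in which only countably many sets have been fixed.

  First a P-point U is built as a tower of pseudo-intersections deciding every set and making every
  function constant or finite-to-one. The gap then lives in the triangle of the grid omega x omega
  below the diagonal: every A_a has its set of columns outside U, every B_a has column sizes tending
  to infinity along U, and every column is avoided by some B_a. Hence the columns form a lower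
  semicontinuous map on Y_U, and a continuous selection of it would be the graph of a function f with
  {n. (n, f n) in B_a} in U for all a; each such f is killed at some stage.

  A lower semicontinuous map on the convergent sequence either has a point of omega in its value at
  infinity, which gives a locally constant selection, or it is recorded by the traces of its values
  on omega. Since the P-point can separate thin subfamilies from hitting sets, each recorded map is
  at some stage either given a finite-to-one selection inside A_a, which is continuous because A_a is
  almost contained in every B_b, or refuted as a lower semicontinuous map.
*)
theory Submission
  imports Defs "HOL-Library.Countable_Set_Type"
begin

unbundle cardinal_syntax

section \<open>The ordinal omega1\<close>

lemma Card_order_omega1: "Card_order omega1"
  by (simp add: cardSuc_Card_order natLeq_Card_order)

lemma wo_rel_omega1: "wo_rel omega1"
  using Card_order_omega1 card_order_on_def wo_rel_def by blast

lemma countable_underS_omega1: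
  assumes "a \<in> Field omega1"
  shows "countable (underS omega1 a)"
proof -
  have "|underS omega1 a| <o omega1" using card_of_underS[OF Card_order_omega1 assms] .
  hence "|underS omega1 a| \<le>o natLeq"
    using cardSuc_ordLeq_ordLess[OF natLeq_Card_order card_of_Card_order] by blast
  thus ?thesis using countable_card_le_natLeq by blast
qed

lemma uncountable_Field_omega1: "\<not> countable (Field omega1)"
proof
  assume "countable (Field omega1)"
  hence "|Field omega1| \<le>o natLeq" using countable_card_le_natLeq by blast
  moreover have "|Field omega1| =o omega1" using card_of_Field_ordIso[OF Card_order_omega1] .
  ultimately have "omega1 \<le>o natLeq"
    using ordIso_ordLeq_trans ordIso_symmetric by blast
  moreover have "natLeq <o omega1" using cardSuc_greater natLeq_Card_order by blast
  ultimately show False using not_ordLess_ordLeq by blast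
qed

lemma Field_omega1_nonempty: "Field omega1 \<noteq> {}"
  using uncountable_Field_omega1 by auto

lemma underS_omega1_subset_Field: "underS omega1 a \<subseteq> Field omega1"
  unfolding underS_def Field_def by auto

lemma underS_omega1_trans:
  assumes "b \<in> underS omega1 a" "c \<in> underS omega1 b"
  shows "c \<in> underS omega1 a"
proof -
  have "trans omega1" "antisym omega1" using wo_rel.TRANS wo_rel.ANTISYM wo_rel_omega1 by blast+
  thus ?thesis using assms unfolding underS_def trans_def antisym_def by blast
qed

lemma omega1_cases:
  assumes "x \<in> Field omega1" "y \<in> Field omega1"
  shows "x = y \<or> x \<in> underS omega1 y \<or> y \<in> underS omega1 x"
  using wo_rel.TOTALS[OF wo_rel_omega1] assms unfolding underS_def by blast

lemma countable_subset_underS_omega1: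
  assumes "countable S" "S \<subseteq> Field omega1"
  shows "\<exists>a\<in>Field omega1. S \<subseteq> underS omega1 a"
proof (rule ccontr)
  assume unbounded: "\<not> ?thesis"
  have "Field omega1 \<subseteq> (\<Union>x\<in>S. insert x (underS omega1 x))"
  proof
    fix a assume a: "a \<in> Field omega1"
    then obtain x where "x \<in> S" "x \<notin> underS omega1 a" using unbounded by blast
    thus "a \<in> (\<Union>x\<in>S. insert x (underS omega1 x))"
      using omega1_cases[OF a, of x] assms(2) by blast
  qed
  moreover have "countable (\<Union>x\<in>S. insert x (underS omega1 x))"
    using assms by (intro countable_UN) (auto intro!: countable_underS_omega1)
  ultimately show False using uncountable_Field_omega1 countable_subset by blast
qed

lemma finite_has_max_omega1:
  assumes "finite F" "F \<noteq> {}" "F \<subseteq> Field omega1"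
  shows "\<exists>m\<in>F. \<forall>a\<in>F. a = m \<or> a \<in> underS omega1 m"
  using assms
proof (induct F rule: finite_ne_induct)
  case (insert y F)
  then obtain m where m: "m \<in> F" "\<forall>a\<in>F. a = m \<or> a \<in> underS omega1 m" by blast
  show ?case
  proof (cases "m \<in> underS omega1 y")
    case True
    have "a = y \<or> a \<in> underS omega1 y" if "a \<in> insert y F" for a
      using that m(2) True underS_omega1_trans[of m y a] by auto
    thus ?thesis by blast
  next
    case False
    moreover have "y \<in> Field omega1" "m \<in> Field omega1" using insert.prems m(1) by auto
    ultimately have "y = m \<or> y \<in> underS omega1 m" using omega1_cases[of y m] by blast
    thus ?thesis using m by blast
  qed
qed simp

lemma omega1_recursion:
  fixes good :: "(nat set \<Rightarrow> 'b) \<Rightarrow> nat set \<Rightarrow> 'b \<Rightarrow> bool"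
  assumes local: "\<And>h h' a v. a \<in> Field omega1 \<Longrightarrow> (\<forall>x\<in>underS omega1 a. h x = h' x) \<Longrightarrow>
      good h a v = good h' a v"
    and step: "\<And>h a. a \<in> Field omega1 \<Longrightarrow> (\<forall>x\<in>underS omega1 a. good h x (h x)) \<Longrightarrow> \<exists>v. good h a v"
  shows "\<exists>h. \<forall>a\<in>Field omega1. good h a (h a)"
proof -
  define H where "H = (\<lambda>h a. SOME v. (a \<in> Field omega1 \<and> (\<forall>x\<in>underS omega1 a. good h x (h x))) \<longrightarrow> good h a v)"
  have adm: "wo_rel.adm_wo omega1 H"
    unfolding wo_rel.adm_wo_def[OF wo_rel_omega1]
  proof (intro allI impI)
    fix f g :: "nat set \<Rightarrow> 'b" and x
    assume fg: "\<forall>y\<in>underS omega1 x. f y = g y"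
    show "H f x = H g x"
    proof (cases "x \<in> Field omega1")
      case True
      have "good f y (f y) = good g y (g y)" if y: "y \<in> underS omega1 x" for y
      proof -
        have "\<forall>z\<in>underS omega1 y. f z = g z" using fg y underS_omega1_trans by blast
        hence "good f y (f y) = good g y (f y)"
          using local y underS_omega1_subset_Field by blast
        thus ?thesis using fg y by simp
      qed
      moreover have "good f x v = good g x v" for v using local[OF True fg] .
      ultimately show ?thesis unfolding H_def by simp
    qed (simp add: H_def)
  qed
  define h where "h = wo_rel.worec omega1 H"
  have h_fix: "h = H h" unfolding h_def using wo_rel.worec_fixpoint[OF wo_rel_omega1 adm] .
  have "a \<in> Field omega1 \<longrightarrow> good h a (h a)" for a
  proof (induct a rule: wo_rel.well_order_induct[OF wo_rel_omega1])
    case (1 x)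
    show ?case
    proof
      assume x: "x \<in> Field omega1"
      have IH: "\<forall>y\<in>underS omega1 x. good h y (h y)"
        using 1 underS_omega1_subset_Field unfolding underS_def by blast
      obtain v where "good h x v" using step[OF x IH] by blast
      hence "good h x (H h x)"
        unfolding H_def using x IH by (rule_tac someI2) auto
      thus "good h x (h x)" using h_fix by metis
    qed
  qed
  thus ?thesis by blast
qed

lemma CH_imp_bij_omega1:
  assumes "CH"
  shows "\<exists>e. bij_betw e (Field omega1) (UNIV :: nat set set)"
proof -
  have "|UNIV :: nat set set| =o omega1" using assms unfolding CH_def by simp
  moreover have "|Field omega1| =o omega1" using card_of_Field_ordIso[OF Card_order_omega1] .
  ultimately have "|Field omega1| =o |UNIV :: nat set set|"
    using ordIso_symmetric ordIso_transitive by blast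
  thus ?thesis using card_of_ordIso by blast
qed

section \<open>Almost inclusion\<close>

lemma almost_subset_refl [simp]: "almost_subset A A"
  unfolding almost_subset_def by simp

lemma subset_imp_almost_subset: "A \<subseteq> B \<Longrightarrow> almost_subset A B"
  unfolding almost_subset_def by (simp add: Diff_eq_empty_iff[THEN iffD2])

lemma almost_subset_trans: "almost_subset A B \<Longrightarrow> almost_subset B C \<Longrightarrow> almost_subset A C"
  unfolding almost_subset_def by (rule finite_subset[of _ "(A - B) \<union> (B - C)"]) auto

lemma almost_subset_Un: "almost_subset A C \<Longrightarrow> almost_subset B C \<Longrightarrow> almost_subset (A \<union> B) C"
  unfolding almost_subset_def by (simp add: Un_Diff)

lemma almost_subset_Int: "almost_subset A B \<Longrightarrow> almost_subset A C \<Longrightarrow> almost_subset A (B \<inter> C)"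
  unfolding almost_subset_def by (rule finite_subset[of _ "(A - B) \<union> (A - C)"]) auto

lemma almost_subset_Diff_finite: "finite K \<Longrightarrow> almost_subset A (A - K)"
  unfolding almost_subset_def by (rule finite_subset[of _ K]) auto

lemma almost_subset_subset_left: "A' \<subseteq> A \<Longrightarrow> almost_subset A B \<Longrightarrow> almost_subset A' B"
  using subset_imp_almost_subset almost_subset_trans by blast

lemma almost_subset_subset_right: "B \<subseteq> B' \<Longrightarrow> almost_subset A B \<Longrightarrow> almost_subset A B'"
  using subset_imp_almost_subset almost_subset_trans by blast

lemma almost_subset_infinite: "almost_subset A B \<Longrightarrow> infinite A \<Longrightarrow> infinite B"
  unfolding almost_subset_def by (metis Diff_infinite_finite finite_Diff2)

lemma almost_subset_Inter_finite:
  assumes "finite F" "\<forall>X\<in>F. almost_subset A X"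
  shows "almost_subset A (\<Inter>F)"
proof -
  have "A - \<Inter>F \<subseteq> (\<Union>X\<in>F. A - X)" by blast
  thus ?thesis using assms unfolding almost_subset_def by (meson finite_UN_I finite_subset)
qed

lemma antimono_infinite_pseudo_intersection:
  fixes I :: "nat \<Rightarrow> nat set"
  assumes "\<And>k. infinite (I k)" "\<And>j k. j \<le> k \<Longrightarrow> I k \<subseteq> I j"
  shows "\<exists>V. infinite V \<and> (\<forall>k. almost_subset V (I k))"
proof -
  define x where "x = (\<lambda>k. SOME v. v \<in> I k \<and> k \<le> v)"
  have x: "x k \<in> I k \<and> k \<le> x k" for k
    unfolding x_def using assms(1)[of k] by (rule_tac someI_ex) (auto simp: infinite_nat_iff_unbounded_le)
  show ?thesis
  proof (intro exI conjI allI)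
    show "infinite (range x)"
      unfolding infinite_nat_iff_unbounded_le using x by blast
    fix j
    have "range x - I j \<subseteq> x ` {..<j}"
    proof
      fix y assume "y \<in> range x - I j"
      then obtain k where k: "y = x k" "x k \<notin> I j" by blast
      hence "k < j" using x assms(2) by (meson not_less subsetD)
      thus "y \<in> x ` {..<j}" using k by blast
    qed
    thus "almost_subset (range x) (I j)"
      unfolding almost_subset_def using finite_subset by blast
  qed
qed

definition almost_chain :: "nat set set \<Rightarrow> bool" where
  "almost_chain F \<longleftrightarrow> (\<forall>X\<in>F. \<forall>Y\<in>F. almost_subset X Y \<or> almost_subset Y X)"

lemma almost_chain_finite_least:
  assumes "finite F" "F \<noteq> {}" "F \<subseteq> G" "almost_chain G"
  shows "\<exists>X\<in>F. almost_subset X (\<Inter>F)"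
  using assms
proof (induct F rule: finite_ne_induct)
  case (insert Y F)
  then obtain X where X: "X \<in> F" "almost_subset X (\<Inter>F)" by blast
  have "almost_subset X Y \<or> almost_subset Y X"
    using insert.prems X(1) unfolding almost_chain_def by blast
  thus ?case
    using X almost_subset_Int[of X Y] almost_subset_Int[of Y Y] almost_subset_trans[of Y X]
    by fastforce
qed simp

lemma countable_almost_chain_pseudo_intersection:
  assumes "countable F" "almost_chain F" "\<forall>X\<in>F. infinite X"
  shows "\<exists>V. infinite V \<and> (\<forall>X\<in>F. almost_subset V X)"
proof (cases "F = {}")
  case False
  define Xs where "Xs = from_nat_into F"
  have Xs: "Xs i \<in> F" for i using False from_nat_into Xs_def by blast
  have "infinite (\<Inter>i\<le>k. Xs i)" for k
  proof -
    obtain X where "X \<in> Xs ` {..k}" "almost_subset X (\<Inter>(Xs ` {..k}))"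
      using almost_chain_finite_least[of "Xs ` {..k}" F] Xs assms(2) by blast
    thus ?thesis using Xs assms(3) almost_subset_infinite by blast
  qed
  then obtain V where V: "infinite V" "\<forall>k. almost_subset V (\<Inter>i\<le>k. Xs i)"
    using antimono_infinite_pseudo_intersection[of "\<lambda>k. \<Inter>i\<le>k. Xs i"] by fastforce
  have "almost_subset V X" if X: "X \<in> F" for X
  proof -
    obtain i where "X = Xs i" using from_nat_into_surj[OF assms(1) X] unfolding Xs_def by metis
    thus ?thesis using V(2) almost_subset_subset_right[of "\<Inter>j\<le>i. Xs j" X] by blast
  qed
  thus ?thesis using V(1) by blast
qed (auto intro: exI[of _ UNIV])

section \<open>Free ultrafilters and P-points\<close>

lemma infinite_split_disjoint:
  assumes "infinite (J :: 'a set)"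
  shows "\<exists>J1 J2. J1 \<subseteq> J \<and> J2 \<subseteq> J \<and> J1 \<inter> J2 = {} \<and> infinite J1 \<and> infinite J2"
proof -
  obtain f :: "nat \<Rightarrow> 'a" where f: "inj f" "range f \<subseteq> J"
    using infinite_countable_subset[OF assms] by blast
  have "infinite {n::nat. even n}" "infinite {n::nat. odd n}"
    by (simp_all add: infinite_nat_iff_unbounded_le; presburger)+
  hence "infinite (f ` {n. even n})" "infinite (f ` {n. odd n})"
    using f(1) by (auto dest: finite_imageD[OF _ inj_on_subset[OF f(1)]])
  moreover have "f ` {n. even n} \<inter> f ` {n. odd n} = {}"
    using f(1) by (auto dest: injD)
  ultimately show ?thesis
    using f(2) by (intro exI[of _ "f ` {n. even n}"] exI[of _ "f ` {n. odd n}"]) auto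
qed

locale free_ultrafilter =
  fixes U :: "nat set set"
  assumes free_ultrafilter: "free_ultrafilter_on_nat U"
begin

lemma superset_in: "A \<in> U \<Longrightarrow> A \<subseteq> B \<Longrightarrow> B \<in> U"
  using free_ultrafilter unfolding free_ultrafilter_on_nat_def ultrafilter_on_nat_def by blast

lemma Int_in: "A \<in> U \<Longrightarrow> B \<in> U \<Longrightarrow> A \<inter> B \<in> U"
  using free_ultrafilter unfolding free_ultrafilter_on_nat_def ultrafilter_on_nat_def by blast

lemma UNIV_in: "UNIV \<in> U"
  using free_ultrafilter unfolding free_ultrafilter_on_nat_def ultrafilter_on_nat_def by blast

lemma infinite_if_in: "A \<in> U \<Longrightarrow> infinite A"
  using free_ultrafilter unfolding free_ultrafilter_on_nat_def by blast

lemma finite_notin: "finite A \<Longrightarrow> A \<notin> U"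
  using infinite_if_in by blast

lemma notin_iff_Compl_in: "A \<notin> U \<longleftrightarrow> - A \<in> U"
proof -
  have "A \<in> U \<or> - A \<in> U"
    using free_ultrafilter unfolding free_ultrafilter_on_nat_def ultrafilter_on_nat_def by blast
  moreover have "\<not> (A \<in> U \<and> - A \<in> U)" using Int_in[of A "- A"] finite_notin[of "{}"] by auto
  ultimately show ?thesis by blast
qed

lemma Un_notin: "A \<notin> U \<Longrightarrow> B \<notin> U \<Longrightarrow> A \<union> B \<notin> U"
  using Int_in notin_iff_Compl_in by (metis compl_sup)

lemma subset_notin: "A \<notin> U \<Longrightarrow> B \<subseteq> A \<Longrightarrow> B \<notin> U"
  using superset_in by blast

lemma disjoint_notin: "A \<inter> B = {} \<Longrightarrow> A \<notin> U \<or> B \<notin> U"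
  by (metis Int_in finite.emptyI finite_notin)

lemma almost_superset_in: "A \<in> U \<Longrightarrow> almost_subset A B \<Longrightarrow> B \<in> U"
  using finite_notin notin_iff_Compl_in Int_in[of A "- (A - B)"] superset_in
  unfolding almost_subset_def by blast

lemma almost_subset_notin: "almost_subset A X \<Longrightarrow> X \<notin> U \<Longrightarrow> A \<notin> U"
  using almost_superset_in by blast

lemma Diff_finite_in: "A \<in> U \<Longrightarrow> finite F \<Longrightarrow> A - F \<in> U"
  using almost_superset_in almost_subset_Diff_finite by blast

lemma cofinite_in: "finite (- A) \<Longrightarrow> A \<in> U"
  using Diff_finite_in[OF UNIV_in, of "- A"] by (simp add: Diff_Compl)

lemma disjoint_family_Union_notin:
  assumes "infinite J" "\<forall>a\<in>J. \<forall>b\<in>J. a \<noteq> b \<longrightarrow> S a \<inter> S b = {}"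
  shows "\<exists>J'\<subseteq>J. infinite J' \<and> (\<Union>a\<in>J'. S a) \<notin> U"
proof -
  obtain J1 J2 where J: "J1 \<subseteq> J" "J2 \<subseteq> J" "J1 \<inter> J2 = {}" "infinite J1" "infinite J2"
    using infinite_split_disjoint[OF assms(1)] by blast
  have "S a \<inter> S b = {}" if "a \<in> J1" "b \<in> J2" for a b
  proof -
    have "a \<noteq> b" using that J(3) by blast
    thus ?thesis using that J(1,2) assms(2) by blast
  qed
  hence "(\<Union>a\<in>J1. S a) \<inter> (\<Union>a\<in>J2. S a) = {}" by blast
  from disjoint_notin[OF this] show ?thesis
  proof
    assume "(\<Union>a\<in>J1. S a) \<notin> U" thus ?thesis using J(1,4) by blast
  next
    assume "(\<Union>a\<in>J2. S a) \<notin> U" thus ?thesis using J(2,5) by blast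
  qed
qed

lemma infinite_subset_notin: "infinite S \<Longrightarrow> \<exists>S'\<subseteq>S. infinite S' \<and> S' \<notin> U"
  using disjoint_family_Union_notin[of S "\<lambda>n. {n}"] by auto

end

locale p_point =
  fixes U :: "nat set set"
  assumes P_point: "P_point U"

sublocale p_point \<subseteq> free_ultrafilter
  using P_point unfolding P_point_def by unfold_locales blast

context p_point
begin

lemma countable_pseudo_intersection:
  fixes Y :: "nat \<Rightarrow> nat set"
  assumes Y: "\<And>i. Y i \<in> U"
  shows "\<exists>Z\<in>U. \<forall>i. almost_subset Z (Y i)"
proof (cases "(\<Inter>i. Y i) \<in> U")
  case True
  thus ?thesis by (intro bexI[of _ "\<Inter>i. Y i"]) (auto intro: subset_imp_almost_subset)
next
  case False
  define D where "D = - (\<Inter>i. Y i)"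
  have D: "D \<in> U" using False notin_iff_Compl_in D_def by blast
  define g where "g = (\<lambda>x. LEAST i. x \<notin> Y i)"
  have g: "x \<notin> Y (g x) \<and> (\<forall>i. x \<notin> Y i \<longrightarrow> g x \<le> i)" if x: "x \<in> D" for x
  proof -
    obtain i0 where "x \<notin> Y i0" using x unfolding D_def by blast
    thus ?thesis unfolding g_def by (metis LeastI Least_le)
  qed
  obtain A where A: "A \<in> U" "(\<exists>c. \<forall>n\<in>A. g n = c) \<or> (\<forall>m. finite {n\<in>A. g n = m})"
    using P_point unfolding P_point_def by blast
  show ?thesis
  proof (cases "\<exists>c. \<forall>n\<in>A. g n = c")
    case True
    then obtain c where c: "\<forall>n\<in>A. g n = c" by blast
    have "A \<inter> D \<inter> Y c \<in> U" using A(1) D Y Int_in by blast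
    then obtain x where "x \<in> A \<inter> D \<inter> Y c" using finite_notin by (metis equals0I finite.emptyI)
    thus ?thesis using c g by auto
  next
    case False
    hence fin: "\<forall>m. finite {n\<in>A. g n = m}" using A(2) by blast
    have "finite (A \<inter> D - Y i)" for i
    proof -
      have "A \<inter> D - Y i \<subseteq> (\<Union>m\<le>i. {n\<in>A. g n = m})" using g by fastforce
      thus ?thesis using fin by (meson finite_UN_I finite_atMost finite_subset)
    qed
    thus ?thesis using A(1) D Int_in unfolding almost_subset_def by blast
  qed
qed

end

section \<open>A grid on the natural numbers\<close>

definition col_of :: "nat \<Rightarrow> nat" where "col_of x = fst (prod_decode x)"
definition row_of :: "nat \<Rightarrow> nat" where "row_of x = snd (prod_decode x)"
definition cell :: "nat \<Rightarrow> nat \<Rightarrow> nat" where "cell n m = prod_encode (n, m)"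
definition grid_column :: "nat \<Rightarrow> nat set" where "grid_column n = {x. col_of x = n}"

lemma col_of_cell [simp]: "col_of (cell n m) = n"
  unfolding col_of_def cell_def by simp

lemma row_of_cell [simp]: "row_of (cell n m) = m"
  unfolding row_of_def cell_def by simp

lemma cell_col_of_row_of [simp]: "cell (col_of x) (row_of x) = x"
  unfolding col_of_def row_of_def cell_def by simp

lemma cell_eq_iff [simp]: "cell n m = cell n' m' \<longleftrightarrow> n = n' \<and> m = m'"
  unfolding cell_def by (metis prod.inject prod_encode_eq)

lemma in_grid_column_iff [simp]: "x \<in> grid_column n \<longleftrightarrow> col_of x = n"
  unfolding grid_column_def by simp

lemma grid_column_nonempty: "grid_column n \<noteq> {}"
proof -
  have "cell n 0 \<in> grid_column n" by simp
  thus ?thesis by blast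
qed

definition decode_fun :: "nat set \<Rightarrow> nat \<Rightarrow> nat" where
  "decode_fun S n = (LEAST m. cell n m \<in> S)"

lemma decode_fun_graph: "decode_fun {cell n (f n) | n. True} = f"
  unfolding decode_fun_def by (rule ext, rule Least_equality) auto

section \<open>P-points under CH\<close>

definition decides :: "nat set \<Rightarrow> nat set \<Rightarrow> (nat \<Rightarrow> nat) \<Rightarrow> bool" where
  "decides V D f \<longleftrightarrow> (V \<subseteq> D \<or> V \<subseteq> - D) \<and> ((\<exists>c. \<forall>n\<in>V. f n = c) \<or> (\<forall>m. finite {n\<in>V. f n = m}))"

lemma infinite_subset_decides:
  assumes "infinite V"
  shows "\<exists>W\<subseteq>V. infinite W \<and> decides W D f"
proof -
  obtain V1 where V1: "V1 \<subseteq> V" "infinite V1" "V1 \<subseteq> D \<or> V1 \<subseteq> - D"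
  proof (cases "infinite (V \<inter> D)")
    case False
    hence "infinite (V - D)" using assms by (metis Diff_Diff_Int Diff_infinite_finite inf_commute)
    thus ?thesis using that[of "V - D"] by blast
  qed (use that[of "V \<inter> D"] in blast)
  obtain W where "W \<subseteq> V1" "infinite W" "(\<exists>c. \<forall>n\<in>W. f n = c) \<or> (\<forall>m. finite {n\<in>W. f n = m})"
  proof (cases "\<exists>c. infinite {n\<in>V1. f n = c}")
    case True
    then obtain c where "infinite {n\<in>V1. f n = c}" by blast
    thus ?thesis using that[of "{n\<in>V1. f n = c}"] by blast
  qed (use V1 that[of V1] in blast)
  thus ?thesis using V1 unfolding decides_def by blast
qed

lemma deciding_tower_exists:
  fixes e :: "nat set \<Rightarrow> nat set"
  shows "\<exists>h. \<forall>a\<in>Field omega1. infinite (h a) \<and> (\<forall>x\<in>underS omega1 a. almost_subset (h a) (h x)) \<and>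
     decides (h a) (e a) (decode_fun (e a))"
proof (rule omega1_recursion)
  fix h :: "nat set \<Rightarrow> nat set" and a
  assume a: "a \<in> Field omega1" and IH: "\<forall>x\<in>underS omega1 a.
    infinite (h x) \<and> (\<forall>y\<in>underS omega1 x. almost_subset (h x) (h y)) \<and> decides (h x) (e x) (decode_fun (e x))"
  have "almost_chain (h ` underS omega1 a)"
    unfolding almost_chain_def
  proof (intro ballI)
    fix X Y assume "X \<in> h ` underS omega1 a" "Y \<in> h ` underS omega1 a"
    then obtain x y where xy: "x \<in> underS omega1 a" "y \<in> underS omega1 a" "X = h x" "Y = h y"
      by blast
    hence "x = y \<or> x \<in> underS omega1 y \<or> y \<in> underS omega1 x"
      using omega1_cases underS_omega1_subset_Field by blast
    thus "almost_subset X Y \<or> almost_subset Y X" using IH xy by auto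
  qed
  moreover have "countable (h ` underS omega1 a)" using countable_underS_omega1[OF a] by blast
  moreover have "\<forall>X\<in>h ` underS omega1 a. infinite X" using IH by blast
  ultimately obtain V0 where V0: "infinite V0" "\<forall>X\<in>h ` underS omega1 a. almost_subset V0 X"
    using countable_almost_chain_pseudo_intersection by blast
  obtain V where V: "V \<subseteq> V0" "infinite V" "decides V (e a) (decode_fun (e a))"
    using infinite_subset_decides[OF V0(1)] by blast
  have "\<forall>x\<in>underS omega1 a. almost_subset V (h x)"
    using V0(2) V(1) almost_subset_subset_left by blast
  thus "\<exists>v. infinite v \<and> (\<forall>x\<in>underS omega1 a. almost_subset v (h x)) \<and> decides v (e a) (decode_fun (e a))"
    using V by blast
qed simp

lemma free_ultrafilter_of_tower:
  fixes h :: "nat set \<Rightarrow> nat set"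
  assumes inf: "\<And>a. a \<in> Field omega1 \<Longrightarrow> infinite (h a)"
    and below: "\<And>a x. a \<in> Field omega1 \<Longrightarrow> x \<in> underS omega1 a \<Longrightarrow> almost_subset (h a) (h x)"
    and decided: "\<And>D. \<exists>a\<in>Field omega1. h a \<subseteq> D \<or> h a \<subseteq> - D"
  shows "free_ultrafilter_on_nat {D. \<exists>a\<in>Field omega1. almost_subset (h a) D}"
    (is "free_ultrafilter_on_nat ?U")
proof -
  have chain: "almost_subset (h a) (h b) \<or> almost_subset (h b) (h a)"
    if "a \<in> Field omega1" "b \<in> Field omega1" for a b
    using omega1_cases[OF that] below that by auto
  have Int: "A \<inter> B \<in> ?U" if AB: "A \<in> ?U" "B \<in> ?U" for A B
  proof -
    obtain a b where ab: "a \<in> Field omega1" "b \<in> Field omega1"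
      "almost_subset (h a) A" "almost_subset (h b) B"
      using AB by blast
    from chain[OF ab(1,2)] show ?thesis
    proof
      assume "almost_subset (h a) (h b)"
      thus ?thesis using ab almost_subset_Int almost_subset_trans by blast
    next
      assume "almost_subset (h b) (h a)"
      thus ?thesis using ab almost_subset_Int almost_subset_trans by blast
    qed
  qed
  have "\<forall>A\<in>?U. infinite A" using inf almost_subset_infinite by blast
  moreover have "ultrafilter_on_nat ?U" unfolding ultrafilter_on_nat_def
  proof (intro conjI allI impI)
    show "{} \<notin> ?U" using calculation by blast
    show "UNIV \<in> ?U" using Field_omega1_nonempty by (auto simp: almost_subset_def)
    show "B \<in> ?U" if "A \<in> ?U \<and> A \<subseteq> B" for A B
      using that almost_subset_subset_right by blast
    show "A \<inter> B \<in> ?U" if "A \<in> ?U \<and> B \<in> ?U" for A B using that Int by blast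
    show "A \<in> ?U \<or> - A \<in> ?U" for A
      using decided[of A] subset_imp_almost_subset by blast
  qed
  ultimately show ?thesis unfolding free_ultrafilter_on_nat_def by blast
qed

lemma P_point_exists:
  assumes "CH"
  shows "\<exists>U. P_point U"
proof -
  obtain e where e: "bij_betw e (Field omega1) (UNIV :: nat set set)"
    using CH_imp_bij_omega1[OF assms] by blast
  have e_onto: "\<exists>a\<in>Field omega1. e a = D" for D
    using e unfolding bij_betw_def by (metis UNIV_I imageE)
  obtain h where h: "\<forall>a\<in>Field omega1. infinite (h a) \<and>
      (\<forall>x\<in>underS omega1 a. almost_subset (h a) (h x)) \<and> decides (h a) (e a) (decode_fun (e a))"
    using deciding_tower_exists[of e] by (elim exE) assumption
  have h_dec: "\<And>a. a \<in> Field omega1 \<Longrightarrow> decides (h a) (e a) (decode_fun (e a))"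
    using h by simp
  define U where "U = {D. \<exists>a\<in>Field omega1. almost_subset (h a) D}"
  have "free_ultrafilter_on_nat U"
    unfolding U_def
  proof (rule free_ultrafilter_of_tower)
    show "\<exists>a\<in>Field omega1. h a \<subseteq> D \<or> h a \<subseteq> - D" for D
      using e_onto[of D] h_dec unfolding decides_def by blast
  qed (use h in simp_all)
  moreover have "\<exists>A\<in>U. (\<exists>c. \<forall>n\<in>A. f n = c) \<or> (\<forall>m. finite {n\<in>A. f n = m})" for f :: "nat \<Rightarrow> nat"
  proof -
    obtain a where a: "a \<in> Field omega1" "e a = {cell n (f n) | n. True}" using e_onto by blast
    hence "h a \<in> U" unfolding U_def using almost_subset_refl by blast
    moreover have "decode_fun (e a) = f" using a(2) decode_fun_graph by simp
    ultimately show ?thesis using h_dec[OF a(1)] unfolding decides_def by auto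
  qed
  ultimately show ?thesis unfolding P_point_def by blast
qed

section \<open>Column-finite sets and large columns\<close>

definition column_finite :: "nat set \<Rightarrow> bool" where
  "column_finite S \<longleftrightarrow> (\<forall>n. finite (S \<inter> grid_column n))"

definition col_size :: "nat set \<Rightarrow> nat \<Rightarrow> nat" where
  "col_size S n = card (S \<inter> grid_column n)"

lemma column_finite_subset: "column_finite S \<Longrightarrow> T \<subseteq> S \<Longrightarrow> column_finite T"
  unfolding column_finite_def by (meson Int_mono finite_subset order_refl)

lemma column_finite_almost_subset: "column_finite T \<Longrightarrow> almost_subset S T \<Longrightarrow> column_finite S"
  unfolding almost_subset_def column_finite_def
proof
  fix n assume "\<forall>n. finite (T \<inter> grid_column n)" "finite (S - T)"
  hence "finite ((T \<inter> grid_column n) \<union> (S - T))" by blast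
  moreover have "S \<inter> grid_column n \<subseteq> (T \<inter> grid_column n) \<union> (S - T)" by blast
  ultimately show "finite (S \<inter> grid_column n)" using finite_subset by blast
qed

lemma col_size_mono: "column_finite T \<Longrightarrow> S \<subseteq> T \<Longrightarrow> col_size S n \<le> col_size T n"
  unfolding col_size_def column_finite_def by (meson Int_mono card_mono order_refl)

lemma col_size_Diff:
  assumes "column_finite S" "finite (R \<inter> grid_column n)"
  shows "col_size S n \<le> col_size (S - R) n + card (R \<inter> grid_column n)"
proof -
  have "card (S \<inter> grid_column n) \<le> card (((S - R) \<inter> grid_column n) \<union> (R \<inter> grid_column n))"
    using assms unfolding column_finite_def by (intro card_mono) (auto simp: Diff_Int_distrib2)
  also have "\<dots> \<le> card ((S - R) \<inter> grid_column n) + card (R \<inter> grid_column n)" by (rule card_Un_le)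
  finally show ?thesis unfolding col_size_def .
qed

definition grid_triangle :: "nat set" where
  "grid_triangle = {x. row_of x \<le> col_of x}"

definition bottom_row :: "nat set \<Rightarrow> nat set" where
  "bottom_row Q = {cell n 0 | n. n \<in> Q}"

lemma grid_triangle_Int_column: "grid_triangle \<inter> grid_column n = cell n ` {..n}"
proof
  show "grid_triangle \<inter> grid_column n \<subseteq> cell n ` {..n}"
  proof
    fix x assume "x \<in> grid_triangle \<inter> grid_column n"
    hence "x = cell n (row_of x)" "row_of x \<le> n"
      using cell_col_of_row_of[of x] unfolding grid_triangle_def by auto
    thus "x \<in> cell n ` {..n}" by blast
  qed
qed (auto simp: grid_triangle_def)

lemma column_finite_grid_triangle: "column_finite grid_triangle"
  unfolding column_finite_def grid_triangle_Int_column by simp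

lemma col_size_grid_triangle: "col_size grid_triangle n = Suc n"
  unfolding col_size_def grid_triangle_Int_column by (simp add: card_image inj_on_def)

lemma bottom_row_subset_grid_triangle: "bottom_row Q \<subseteq> grid_triangle"
  unfolding bottom_row_def grid_triangle_def by auto

lemma col_of_bottom_row: "col_of ` bottom_row Q = Q"
  unfolding bottom_row_def by force

lemma infinite_bottom_row: "infinite Q \<Longrightarrow> infinite (bottom_row Q)"
  using col_of_bottom_row by (metis finite_imageI)

context free_ultrafilter
begin

definition large_columns :: "nat set \<Rightarrow> bool" where
  "large_columns S \<longleftrightarrow> (\<forall>m. {n. m \<le> col_size S n} \<in> U)"

lemma large_columns_mono:
  "column_finite T \<Longrightarrow> large_columns S \<Longrightarrow> S \<subseteq> T \<Longrightarrow> large_columns T"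
  unfolding large_columns_def
  by (metis (mono_tags, lifting) col_size_mono le_trans mem_Collect_eq subsetI superset_in)

lemma large_columns_Diff_bounded:
  assumes S: "column_finite S" "large_columns S"
    and R: "\<And>n. finite (R \<inter> grid_column n) \<and> card (R \<inter> grid_column n) \<le> k"
  shows "large_columns (S - R)"
  unfolding large_columns_def
proof
  fix m
  have "{n. m + k \<le> col_size S n} \<subseteq> {n. m \<le> col_size (S - R) n}"
    using col_size_Diff[OF S(1)] R by (fastforce dest: le_trans)
  thus "{n. m \<le> col_size (S - R) n} \<in> U"
    using S(2) superset_in unfolding large_columns_def by blast
qed

lemma large_columns_Diff_finite:
  "column_finite S \<Longrightarrow> large_columns S \<Longrightarrow> finite K \<Longrightarrow> large_columns (S - K)"
  using large_columns_Diff_bounded[of S K "card K"] by (meson Int_lower1 card_mono finite_Int)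

lemma large_columns_Diff_columns:
  assumes S: "large_columns S" and R: "col_of ` R \<notin> U"
  shows "large_columns (S - R)"
  unfolding large_columns_def
proof
  fix m
  have "{n. m \<le> col_size S n} \<inter> - (col_of ` R) \<subseteq> {n. m \<le> col_size (S - R) n}"
  proof
    fix n assume n: "n \<in> {n. m \<le> col_size S n} \<inter> - (col_of ` R)"
    hence "(S - R) \<inter> grid_column n = S \<inter> grid_column n" by auto
    thus "n \<in> {n. m \<le> col_size (S - R) n}" using n unfolding col_size_def by simp
  qed
  thus "{n. m \<le> col_size (S - R) n} \<in> U"
    using S R Int_in notin_iff_Compl_in superset_in unfolding large_columns_def by blast
qed

lemma large_columns_Diff_column:
  assumes "large_columns S"
  shows "large_columns (S - grid_column c)"
proof -
  have "col_of ` grid_column c \<subseteq> {c}" by auto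
  hence "col_of ` grid_column c \<notin> U" using finite_notin[of "{c}"] subset_notin by blast
  thus ?thesis using large_columns_Diff_columns[OF assms] by blast
qed

lemma large_columns_nonempty_columns:
  assumes "column_finite S" "large_columns S" "finite K"
  shows "{n. (S - K) \<inter> grid_column n \<noteq> {}} \<in> U"
proof -
  have "{n. 1 \<le> col_size (S - K) n} \<in> U"
    using large_columns_Diff_finite[OF assms] unfolding large_columns_def by blast
  moreover have "{n. 1 \<le> col_size (S - K) n} \<subseteq> {n. (S - K) \<inter> grid_column n \<noteq> {}}"
    unfolding col_size_def by (auto simp: card_gt_0_iff[symmetric])
  ultimately show ?thesis using superset_in by blast
qed

lemma large_columns_grid_triangle: "large_columns grid_triangle"
  unfolding large_columns_def col_size_grid_triangle
proof
  fix m
  have "- {n. m \<le> Suc n} \<subseteq> {..m}" by auto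
  thus "{n. m \<le> Suc n} \<in> U" using cofinite_in finite_subset by blast
qed

end

section \<open>Combinatorics of finite sets along an ultrafilter\<close>

lemma infinite_disjoint_subfamily_or_transversal:
  fixes S :: "'a \<Rightarrow> 'b set"
  assumes fin: "\<forall>n\<in>I. finite (S n) \<and> S n \<noteq> {}"
  shows "(\<exists>J\<subseteq>I. infinite J \<and> (\<forall>a\<in>J. \<forall>b\<in>J. a \<noteq> b \<longrightarrow> S a \<inter> S b = {})) \<or>
         (\<exists>H. finite H \<and> (\<forall>n\<in>I. S n \<inter> H \<noteq> {}))"
proof (rule disjCI)
  assume "\<not> (\<exists>H. finite H \<and> (\<forall>n\<in>I. S n \<inter> H \<noteq> {}))"
  hence "\<exists>n. n \<in> I \<and> S n \<inter> H = {}" if "finite H" for H using that by blast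
  then obtain pick where pick: "\<And>H. finite H \<Longrightarrow> pick H \<in> I \<and> S (pick H) \<inter> H = {}" by metis
  define T where "T = rec_nat {} (\<lambda>_ H. H \<union> S (pick H))"
  define nn where "nn k = pick (T k)" for k
  have T_Suc: "T (Suc k) = T k \<union> S (nn k)" for k unfolding T_def nn_def by simp
  have T_fin: "finite (T k)" for k
  proof (induct k)
    case (Suc k) thus ?case using pick[OF Suc] fin by (simp add: T_Suc nn_def)
  qed (simp add: T_def)
  have nn: "nn k \<in> I \<and> S (nn k) \<inter> T k = {}" for k
    unfolding nn_def using pick[OF T_fin] .
  have S_T: "S (nn i) \<subseteq> T k" if "i < k" for i k
    using that by (induct k) (auto simp: T_Suc less_Suc_eq)
  have disj: "S (nn i) \<inter> S (nn k) = {}" if "i \<noteq> k" for i k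
    using that S_T nn by (metis Int_commute disjoint_iff_not_equal linorder_neqE_nat subsetD)
  have "inj nn"
    by (rule injI, rule ccontr) (use disj fin nn in fastforce)
  hence "infinite (range nn)" using range_inj_infinite by blast
  moreover have "\<forall>a\<in>range nn. \<forall>b\<in>range nn. a \<noteq> b \<longrightarrow> S a \<inter> S b = {}"
  proof (intro ballI impI)
    fix a b assume "a \<in> range nn" "b \<in> range nn" "a \<noteq> b"
    then obtain i k where "a = nn i" "b = nn k" "i \<noteq> k" by blast
    thus "S a \<inter> S b = {}" using disj by simp
  qed
  moreover have "range nn \<subseteq> I" using nn by auto
  ultimately show "\<exists>J\<subseteq>I. infinite J \<and> (\<forall>a\<in>J. \<forall>b\<in>J. a \<noteq> b \<longrightarrow> S a \<inter> S b = {})"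
    by (intro exI[of _ "range nn"]) simp
qed

context free_ultrafilter
begin

lemma thin_subfamily_or_transversal:
  assumes "\<forall>n\<in>I. finite (S n) \<and> S n \<noteq> {}"
  shows "(\<exists>J\<subseteq>I. infinite J \<and> (\<Union>a\<in>J. S a) \<notin> U) \<or> (\<exists>H. finite H \<and> (\<forall>n\<in>I. S n \<inter> H \<noteq> {}))"
  using infinite_disjoint_subfamily_or_transversal[OF assms] disjoint_family_Union_notin
  by (meson order_trans)

lemma sparse_finite_sets_Union_notin:
  assumes fin: "\<And>j. finite (H j)" and above: "\<And>j. H j \<subseteq> {j..}"
  shows "\<exists>X. X \<notin> U \<and> (\<forall>j. \<exists>j'\<ge>j. H j' \<subseteq> X)"
proof -
  define js where "js = rec_nat 0 (\<lambda>_ p. Suc (Max (insert p (H p))))"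
  have js_Suc: "js (Suc i) = Suc (Max (insert (js i) (H (js i))))" for i unfolding js_def by simp
  have H_js: "H (js i) \<subseteq> {js i..<js (Suc i)}" for i
  proof
    fix x assume x: "x \<in> H (js i)"
    hence "js i \<le> x" using above by blast
    moreover have "x \<le> Max (insert (js i) (H (js i)))" using x fin by simp
    ultimately show "x \<in> {js i..<js (Suc i)}" by (simp add: js_Suc)
  qed
  have "js i < js (Suc i)" for i using fin by (simp add: js_Suc less_Suc_eq_le)
  hence mono: "strict_mono js" by (simp add: strict_mono_Suc_iff)
  have "H (js i) \<inter> H (js i') = {}" if "i < i'" for i i'
  proof -
    have "js (Suc i) \<le> js i'" using that mono by (simp add: strict_mono_less_eq)
    thus ?thesis using H_js[of i] H_js[of i'] by fastforce
  qed
  hence "\<forall>a\<in>UNIV. \<forall>b\<in>UNIV. a \<noteq> b \<longrightarrow> H (js a) \<inter> H (js b) = {}"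
    by (metis Int_commute linorder_neqE_nat)
  then obtain P where P: "infinite P" "(\<Union>i\<in>P. H (js i)) \<notin> U"
    using disjoint_family_Union_notin[of UNIV "\<lambda>i. H (js i)"] by auto
  have "\<exists>j'\<ge>j. H j' \<subseteq> (\<Union>i\<in>P. H (js i))" for j
  proof -
    obtain i where "i \<in> P" "j \<le> i" using P(1) infinite_nat_iff_unbounded_le by blast
    moreover have "i \<le> js i" using mono by (simp add: strict_mono_imp_increasing)
    ultimately show ?thesis by (intro exI[of _ "js i"]) auto
  qed
  thus ?thesis using P(2) by blast
qed

end

context p_point
begin

lemma deciding_pseudo_intersection:
  fixes K :: "'i::countable \<Rightarrow> nat set"
  obtains Y where "Y \<in> U" "\<And>i. K i \<in> U \<Longrightarrow> finite (Y - K i)" "\<And>i. K i \<notin> U \<Longrightarrow> finite (Y \<inter> K i)"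
proof -
  define Ys where "Ys n = (if K (from_nat n) \<in> U then K (from_nat n) else - K (from_nat n))" for n
  have "Ys n \<in> U" for n unfolding Ys_def using notin_iff_Compl_in by auto
  then obtain Y where Y: "Y \<in> U" "\<forall>n. almost_subset Y (Ys n)"
    using countable_pseudo_intersection by blast
  show thesis
  proof (rule that[OF Y(1)])
    show "finite (Y - K i)" if "K i \<in> U" for i
      using Y(2)[rule_format, of "to_nat i"] that unfolding Ys_def almost_subset_def by simp
    show "finite (Y \<inter> K i)" if "K i \<notin> U" for i
      using Y(2)[rule_format, of "to_nat i"] that unfolding Ys_def almost_subset_def
      by (simp add: Diff_Compl)
  qed
qed

lemma hitting_set_or_thin_subfamily:
  fixes K :: "nat \<Rightarrow> nat \<Rightarrow> nat set"
  assumes XA: "XA \<notin> U"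
    and antimono: "\<And>j j' n. j \<le> j' \<Longrightarrow> K j' n \<subseteq> K j n"
    and above: "\<And>j n. K j n \<subseteq> {j..}"
    and nonempty: "\<And>j. finite {n\<in>M. K j n = {}}"
  shows "(\<exists>X. X \<notin> U \<and> (\<forall>j. finite {n\<in>M. K j n \<inter> X = {}})) \<or>
         (\<exists>j J. J \<subseteq> M \<and> infinite J \<and> (\<Union>n\<in>J. K j n) \<notin> U \<and> (\<forall>n\<in>J. K j n \<inter> XA = {}))"
proof (rule disjCI)
  assume no_thin: "\<not> (\<exists>j J. J \<subseteq> M \<and> infinite J \<and> (\<Union>n\<in>J. K j n) \<notin> U \<and> (\<forall>n\<in>J. K j n \<inter> XA = {}))"
  obtain Y where Y: "Y \<in> U" "\<And>i. case_prod K i \<in> U \<Longrightarrow> finite (Y - case_prod K i)"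
    "\<And>i. case_prod K i \<notin> U \<Longrightarrow> finite (Y \<inter> case_prod K i)"
    by (elim deciding_pseudo_intersection[of "case_prod K"])
  have Y_in: "finite (Y - K j n)" if "K j n \<in> U" for j n using Y(2)[of "(j, n)"] that by simp
  have Y_notin: "finite (Y \<inter> K j n)" if "K j n \<notin> U" for j n using Y(3)[of "(j, n)"] that by simp
  obtain Yh where Yh: "Yh \<subseteq> Y" "infinite Yh" "Yh \<notin> U"
    using infinite_subset_notin infinite_if_in[OF Y(1)] by blast
  define F where "F j = {n\<in>M. K j n \<inter> XA = {} \<and> K j n \<notin> U \<and> K j n \<subseteq> Y \<and> K j n \<noteq> {}}" for j
  have "\<exists>H. finite H \<and> (\<forall>n\<in>F j. K j n \<inter> H \<noteq> {})" for j
  proof -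
    have "finite (K j n) \<and> K j n \<noteq> {}" if "n \<in> F j" for n
      using Y_notin[of j n] that unfolding F_def by (simp add: Int_absorb1)
    moreover have "\<not> (\<exists>J\<subseteq>F j. infinite J \<and> (\<Union>n\<in>J. K j n) \<notin> U)"
      using no_thin unfolding F_def by blast
    ultimately show ?thesis using thin_subfamily_or_transversal[of "F j" "K j"] by blast
  qed
  then obtain H where H: "\<And>j. finite (H j)" "\<And>j n. n \<in> F j \<Longrightarrow> K j n \<inter> H j \<noteq> {}"
    by metis
  obtain Xh where Xh: "Xh \<notin> U" "\<forall>j. \<exists>j'\<ge>j. H j' \<inter> {j'..} \<subseteq> Xh"
    using sparse_finite_sets_Union_notin[of "\<lambda>j. H j \<inter> {j..}"] H(1) by auto
  define X where "X = XA \<union> - Y \<union> Yh \<union> Xh"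
  have "- Y \<notin> U" using Y(1) notin_iff_Compl_in by simp
  hence "X \<notin> U"
    unfolding X_def by (intro Un_notin) (use XA Yh(3) Xh(1) in auto)
  moreover have "finite {n\<in>M. K j n \<inter> X = {}}" for j
  proof -
    obtain j' where j': "j \<le> j'" "H j' \<inter> {j'..} \<subseteq> Xh" using Xh(2) by blast
    have "K j' n = {}" if n: "n \<in> M" "K j n \<inter> X = {}" for n
    proof (rule ccontr)
      assume K_ne: "K j' n \<noteq> {}"
      have K: "K j' n \<inter> X = {}" using antimono[OF j'(1)] n(2) by blast
      show False
      proof (cases "K j' n \<in> U")
        case True
        hence "finite (Y - K j' n)" by (rule Y_in)
        moreover have "Yh \<subseteq> Y - K j' n" using Yh(1) K unfolding X_def by blast
        ultimately show False using Yh(2) finite_subset by blast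
      next
        case False
        moreover have "K j' n \<inter> XA = {}" "K j' n \<subseteq> Y" using K unfolding X_def by blast+
        ultimately have "n \<in> F j'" unfolding F_def using n(1) K_ne by simp
        hence "K j' n \<inter> (H j' \<inter> {j'..}) \<noteq> {}" using H(2) above[of j' n] by blast
        thus False using j'(2) K unfolding X_def by blast
      qed
    qed
    hence "{n\<in>M. K j n \<inter> X = {}} \<subseteq> {n\<in>M. K j' n = {}}" by blast
    thus ?thesis using nonempty[of j'] finite_subset by blast
  qed
  ultimately show "\<exists>X. X \<notin> U \<and> (\<forall>j. finite {n\<in>M. K j n \<inter> X = {}})" by blast
qed

lemma interpolation:
  fixes a b :: "nat \<Rightarrow> nat set"
  assumes ab: "\<And>i k. almost_subset (a i) (b k)"
    and a_notin: "\<And>i. col_of ` (a i) \<notin> U" and b0: "column_finite (b 0)"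
  shows "\<exists>C. (\<forall>i. almost_subset (a i) C) \<and> (\<forall>k. almost_subset C (b k)) \<and> col_of ` C \<notin> U \<and> C \<subseteq> b 0"
proof -
  obtain Y where Y: "Y \<in> U" "\<forall>i. almost_subset Y (- (col_of ` (a i)))"
    using countable_pseudo_intersection[of "\<lambda>i. - (col_of ` (a i))"] a_notin notin_iff_Compl_in by blast
  have Y_fin: "finite (Y \<inter> col_of ` (a i))" for i
    using Y(2) unfolding almost_subset_def by (simp add: Diff_Compl)
  have a_cf: "column_finite (a i)" for i using column_finite_almost_subset[OF b0 ab[of i 0]] .
  define C where "C = (\<Union>i. (a i \<inter> (\<Inter>k\<le>i. b k)) - {x. col_of x \<in> Y})"
  have "almost_subset (a i) C" for i
  proof -
    have "a i - C \<subseteq> (\<Union>k\<le>i. a i - b k) \<union> (\<Union>n\<in>Y \<inter> col_of ` (a i). a i \<inter> grid_column n)"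
      unfolding C_def by auto
    moreover have "finite (\<Union>k\<le>i. a i - b k)" using ab unfolding almost_subset_def by blast
    moreover have "finite (\<Union>n\<in>Y \<inter> col_of ` (a i). a i \<inter> grid_column n)"
      using Y_fin a_cf unfolding column_finite_def by blast
    ultimately show ?thesis unfolding almost_subset_def by (meson finite_UnI finite_subset)
  qed
  moreover have "almost_subset C (b k)" for k
  proof -
    have "C - b k \<subseteq> (\<Union>i<k. a i - b k)"
    proof
      fix x assume x: "x \<in> C - b k"
      then obtain i where i: "x \<in> a i" "\<forall>k'\<le>i. x \<in> b k'" unfolding C_def by auto
      hence "i < k" using x by (meson DiffD2 not_less)
      thus "x \<in> (\<Union>i<k. a i - b k)" using i x by blast
    qed
    moreover have "finite (\<Union>i<k. a i - b k)" using ab unfolding almost_subset_def by blast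
    ultimately show ?thesis unfolding almost_subset_def using finite_subset by blast
  qed
  moreover have "col_of ` C \<subseteq> - Y" unfolding C_def by auto
  hence "col_of ` C \<notin> U" using Y(1) notin_iff_Compl_in subset_notin by (metis double_compl)
  moreover have "C \<subseteq> b 0" unfolding C_def by auto
  ultimately show ?thesis by blast
qed

lemma antimono_large_columns_pseudo_intersection:
  fixes c :: "nat \<Rightarrow> nat set"
  assumes antimono: "\<And>j k. j \<le> k \<Longrightarrow> c k \<subseteq> c j"
    and cf: "column_finite (c 0)" and large: "\<And>k. large_columns (c k)"
  shows "\<exists>G. (\<forall>k. almost_subset G (c k)) \<and> large_columns G \<and> G \<subseteq> c 0"
proof -
  have cf_k: "column_finite (c k)" for k using column_finite_subset[OF cf antimono] by blast
  define T where "T i = {n. i \<le> col_size (c i) n}" for i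
  have T_in: "T i \<in> U" for i using large unfolding large_columns_def T_def by blast
  obtain Tt where Tt: "Tt \<in> U" "\<And>i. finite (Tt - T i)"
    using countable_pseudo_intersection[of T] T_in unfolding almost_subset_def by blast
  \<comment> \<open>the deepest level whose column at n is known to have at least that many points\<close>
  define d where "d n = Max {i. i \<le> n \<and> n \<in> T i}" for n
  have d: "d n \<le> n \<and> n \<in> T (d n)" and d_max: "k \<le> n \<Longrightarrow> n \<in> T k \<Longrightarrow> k \<le> d n"
    if "n \<in> T 0" for n k
  proof -
    have fin: "finite {i. i \<le> n \<and> n \<in> T i}" by (rule finite_subset[of _ "{..n}"]) auto
    moreover have "0 \<in> {i. i \<le> n \<and> n \<in> T i}" using that by simp
    ultimately show "d n \<le> n \<and> n \<in> T (d n)" unfolding d_def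
      by (metis (mono_tags, lifting) Max_in empty_iff mem_Collect_eq)
    show "k \<le> n \<Longrightarrow> n \<in> T k \<Longrightarrow> k \<le> d n" unfolding d_def using fin by simp
  qed
  define G where "G = {x. col_of x \<in> Tt \<inter> T 0 \<and> x \<in> c (d (col_of x))}"
  have G_sub: "G \<subseteq> c 0" using antimono unfolding G_def by blast
  have G_col: "G \<inter> grid_column n = c (d n) \<inter> grid_column n" if "n \<in> Tt \<inter> T 0" for n
    using that unfolding G_def by auto
  have "almost_subset G (c k)" for k
  proof -
    have "G - c k \<subseteq> (\<Union>n \<in> {..<k} \<union> (Tt - T k). c 0 \<inter> grid_column n)"
    proof
      fix x assume x: "x \<in> G - c k"
      hence col: "col_of x \<in> Tt \<inter> T 0" and "x \<in> c (d (col_of x))" unfolding G_def by blast+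
      hence "\<not> k \<le> d (col_of x)" using x antimono by blast
      hence "col_of x \<in> {..<k} \<union> (Tt - T k)" using d_max[of "col_of x" k] col by force
      thus "x \<in> (\<Union>n \<in> {..<k} \<union> (Tt - T k). c 0 \<inter> grid_column n)" using x G_sub by auto
    qed
    moreover have "finite (\<Union>n \<in> {..<k} \<union> (Tt - T k). c 0 \<inter> grid_column n)"
      using Tt(2) cf unfolding column_finite_def by blast
    ultimately show ?thesis unfolding almost_subset_def using finite_subset by blast
  qed
  moreover have "large_columns G"
    unfolding large_columns_def
  proof
    fix m
    have "Tt \<inter> T 0 \<inter> T m \<in> U" using Tt(1) T_in[of 0] T_in[of m] Int_in by blast
    hence "Tt \<inter> T 0 \<inter> T m - {..<m} \<in> U" using Diff_finite_in by blast
    moreover have "Tt \<inter> T 0 \<inter> T m - {..<m} \<subseteq> {n. m \<le> col_size G n}"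
    proof
      fix n assume n: "n \<in> Tt \<inter> T 0 \<inter> T m - {..<m}"
      hence n0: "n \<in> T 0" "m \<le> n" "n \<in> T m" "n \<in> Tt" by auto
      have "m \<le> d n" "n \<in> T (d n)" using d_max[OF n0(1-3)] d[OF n0(1)] by auto
      hence "m \<le> col_size (c (d n)) n" unfolding T_def by auto
      also have "\<dots> = col_size G n" using G_col n0 unfolding col_size_def by simp
      finally show "n \<in> {n. m \<le> col_size G n}" by simp
    qed
    ultimately show "{n. m \<le> col_size G n} \<in> U" using superset_in by blast
  qed
  ultimately show ?thesis using G_sub by blast
qed

lemma large_columns_pseudo_intersection:
  fixes b :: "nat \<Rightarrow> nat set"
  assumes chain: "almost_chain (range b)"
    and cf: "\<And>k. column_finite (b k)" and large: "\<And>k. large_columns (b k)"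
  shows "\<exists>G. (\<forall>k. almost_subset G (b k)) \<and> large_columns G \<and> G \<subseteq> b 0"
proof -
  have "large_columns (\<Inter>k\<le>i. b k)" for i
  proof -
    obtain X where X: "X \<in> b ` {..i}" "almost_subset X (\<Inter>k\<le>i. b k)"
      using almost_chain_finite_least[OF _ _ _ chain, of "b ` {..i}"] by auto
    hence "large_columns (X - (X - (\<Inter>k\<le>i. b k)))"
      using large_columns_Diff_finite cf large unfolding almost_subset_def by blast
    moreover have "column_finite (\<Inter>k\<le>i. b k)" by (rule column_finite_subset[OF cf[of 0]]) auto
    moreover have "X - (X - (\<Inter>k\<le>i. b k)) \<subseteq> (\<Inter>k\<le>i. b k)" by blast
    ultimately show ?thesis using large_columns_mono by blast
  qed
  moreover have "(\<Inter>k\<le>i'. b k) \<subseteq> (\<Inter>k\<le>i. b k)" if "i \<le> i'" for i i'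
    using that by auto
  moreover have "column_finite (\<Inter>k\<le>0. b k)" using cf by simp
  ultimately obtain G where G: "\<forall>k. almost_subset G (\<Inter>k'\<le>k. b k')" "large_columns G"
    "G \<subseteq> (\<Inter>k\<le>0. b k)"
    using antimono_large_columns_pseudo_intersection[of "\<lambda>i. \<Inter>k\<le>i. b k"] by blast
  have "almost_subset G (b k)" for k
    using G(1) almost_subset_subset_right[of "\<Inter>k'\<le>k. b k'" "b k" G] by auto
  thus ?thesis using G(2,3) by (intro exI[of _ G]) auto
qed

end

section \<open>Candidate lower semicontinuous maps\<close>

text \<open>A lower semicontinuous map from the convergent sequence into the gap space that sends
  infinity to infinity is recorded by the set M of indices n whose value avoids infinity and by the
  traces psi n of the values on the natural numbers. The conditions below are what lower
  semicontinuity at infinity forces on this data relative to an initial segment P of the gap.\<close>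

definition lsc_candidate :: "nat set set \<Rightarrow> (nat set \<Rightarrow> nat set) \<Rightarrow> (nat \<Rightarrow> nat set) \<Rightarrow> nat set \<Rightarrow> bool" where
  "lsc_candidate P B psi M \<longleftrightarrow> (\<forall>n\<in>M. psi n \<noteq> {}) \<and>
     (\<forall>F. finite F \<and> F \<noteq> {} \<and> F \<subseteq> P \<longrightarrow> finite {n\<in>M. psi n \<inter> \<Inter>(B ` F) = {}}) \<and>
     (\<forall>k. \<exists>x\<in>P. B x \<inter> grid_column k = {})"

definition fto_selection :: "(nat \<Rightarrow> nat set) \<Rightarrow> nat set \<Rightarrow> nat set \<Rightarrow> bool" where
  "fto_selection psi M A \<longleftrightarrow>
     (\<exists>sel. (\<forall>n\<in>M. sel n \<in> psi n) \<and> (\<forall>x. finite {n\<in>M. sel n = x}) \<and> sel ` M \<subseteq> A)"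

definition refuted_by :: "nat set set \<Rightarrow> (nat set \<Rightarrow> nat set) \<Rightarrow> (nat \<Rightarrow> nat set) \<Rightarrow> nat set \<Rightarrow> nat set \<Rightarrow> bool" where
  "refuted_by P B psi M B' \<longleftrightarrow>
     (\<exists>F J. finite F \<and> F \<subseteq> P \<and> J \<subseteq> M \<and> infinite J \<and> (\<forall>n\<in>J. psi n \<inter> B' \<inter> \<Inter>(B ` F) = {}))"

lemma fto_selection_mono: "fto_selection psi M A \<Longrightarrow> A \<subseteq> A' \<Longrightarrow> fto_selection psi M A'"
  unfolding fto_selection_def by blast

lemma refuted_by_mono:
  assumes "refuted_by P B psi M B'" "B'' \<subseteq> B'"
  shows "refuted_by P B psi M B''"
proof -
  obtain F J where "finite F" "F \<subseteq> P" "J \<subseteq> M" "infinite J" "\<forall>n\<in>J. psi n \<inter> B' \<inter> \<Inter>(B ` F) = {}"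
    using assms(1) unfolding refuted_by_def by blast
  moreover have "\<forall>n\<in>J. psi n \<inter> B'' \<inter> \<Inter>(B ` F) = {}" using calculation(5) assms(2) by blast
  ultimately show ?thesis unfolding refuted_by_def by (intro exI[of _ F] exI[of _ J]) simp
qed

lemma lsc_candidate_levels:
  assumes P: "countable P" and cand: "lsc_candidate P B psi M"
  obtains W where "\<And>j j'. j \<le> j' \<Longrightarrow> W j' \<subseteq> W j" "\<And>j. W j \<subseteq> {x. j \<le> col_of x}"
    "\<And>x. x \<in> P \<Longrightarrow> \<exists>j. W j \<subseteq> B x" "\<And>j. finite {n\<in>M. psi n \<inter> W j = {}}"
    "\<And>j. \<exists>F. finite F \<and> F \<subseteq> P \<and> W j = \<Inter>(B ` F)"
proof -
  have avoid: "\<forall>k. \<exists>x\<in>P. B x \<inter> grid_column k = {}" using cand unfolding lsc_candidate_def by blast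
  hence "\<forall>k. \<exists>x. x \<in> P \<and> B x \<inter> grid_column k = {}" by blast
  from choice[OF this] obtain r where r: "\<And>k. r k \<in> P \<and> B (r k) \<inter> grid_column k = {}" by blast
  have "P \<noteq> {}" using avoid by blast
  define e where "e = from_nat_into P"
  have e: "e i \<in> P" for i using from_nat_into[OF \<open>P \<noteq> {}\<close>] e_def by simp
  \<comment> \<open>the j-th level takes the first j stages into account and avoids the first j columns\<close>
  define Fs where "Fs j = e ` {..j} \<union> r ` {..<j}" for j
  have Fs: "finite (Fs j)" "Fs j \<noteq> {}" "Fs j \<subseteq> P" for j unfolding Fs_def using e r by auto
  define W where "W j = \<Inter>(B ` Fs j)" for j
  show thesis
  proof (rule that[of W])
    show "W j' \<subseteq> W j" if "j \<le> j'" for j j'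
      using that unfolding W_def Fs_def by auto
    show "W j \<subseteq> {x. j \<le> col_of x}" for j
    proof
      fix x assume "x \<in> W j"
      moreover have "W j \<subseteq> B (r k)" if "k < j" for k using that unfolding W_def Fs_def by auto
      ultimately have "\<not> col_of x < j \<or> x \<in> B (r (col_of x)) \<inter> grid_column (col_of x)" by auto
      thus "x \<in> {x. j \<le> col_of x}" using r[of "col_of x"] by auto
    qed
    show "\<exists>j. W j \<subseteq> B x" if x: "x \<in> P" for x
    proof -
      obtain i where "e i = x" using from_nat_into_surj[OF P x] e_def by blast
      thus ?thesis unfolding W_def Fs_def by auto
    qed
    have cond: "\<And>F. finite F \<Longrightarrow> F \<noteq> {} \<Longrightarrow> F \<subseteq> P \<Longrightarrow> finite {n\<in>M. psi n \<inter> \<Inter>(B ` F) = {}}"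
      using cand unfolding lsc_candidate_def by blast
    show "finite {n\<in>M. psi n \<inter> W j = {}}" for j
      unfolding W_def by (rule cond[OF Fs(1) Fs(2) Fs(3)])
    show "\<exists>F. finite F \<and> F \<subseteq> P \<and> W j = \<Inter>(B ` F)" for j
      unfolding W_def using Fs(1,3) by (intro exI[of _ "Fs j"]) simp
  qed
qed

lemma deepest_selection:
  fixes S :: "nat \<Rightarrow> nat \<Rightarrow> 'a set"
  assumes antimono: "\<And>n j j'. j \<le> j' \<Longrightarrow> S n j' \<subseteq> S n j"
    and sub: "\<And>n j. S n j \<subseteq> T n" and nonempty: "\<And>n. n \<in> M \<Longrightarrow> T n \<noteq> {}"
  shows "\<exists>sel. (\<forall>n\<in>M. sel n \<in> T n) \<and> (\<forall>n j. j \<le> n \<longrightarrow> S n j \<noteq> {} \<longrightarrow> sel n \<in> S n j)"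
proof -
  have "\<exists>x. (n \<in> M \<longrightarrow> x \<in> T n) \<and> (\<forall>j\<le>n. S n j \<noteq> {} \<longrightarrow> x \<in> S n j)" for n
  proof (cases "\<exists>j\<le>n. S n j \<noteq> {}")
    case True
    define t where "t = Max {j. j \<le> n \<and> S n j \<noteq> {}}"
    have fin: "finite {j. j \<le> n \<and> S n j \<noteq> {}}" by (rule finite_subset[of _ "{..n}"]) auto
    hence "t \<in> {j. j \<le> n \<and> S n j \<noteq> {}}" unfolding t_def using True Max_in by blast
    then obtain x where x: "x \<in> S n t" by blast
    have "x \<in> S n j" if "j \<le> n" "S n j \<noteq> {}" for j
      using antimono[of j t n] x that fin unfolding t_def by auto
    thus ?thesis using x sub by blast
  next
    case False
    thus ?thesis using nonempty by blast
  qed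
  thus ?thesis by metis
qed

lemma selection_from_hitting_set:
  fixes W :: "nat \<Rightarrow> nat set" and psi :: "nat \<Rightarrow> nat set"
  assumes antimono: "\<And>j j'. j \<le> j' \<Longrightarrow> W j' \<subseteq> W j"
    and above: "\<And>j. W j \<subseteq> {x. j \<le> col_of x}"
    and nonempty: "\<forall>n\<in>M. psi n \<noteq> {}"
    and hits: "\<And>j. finite {n\<in>M. col_of ` (psi n \<inter> W j) \<inter> X = {}}"
  shows "\<exists>sel. (\<forall>n\<in>M. sel n \<in> psi n) \<and> (\<forall>x. finite {n\<in>M. sel n = x}) \<and>
    (\<forall>j. almost_subset (sel ` M) (W j)) \<and> almost_subset (col_of ` sel ` M) X"
proof -
  define hit where "hit n j = psi n \<inter> W j \<inter> {x. col_of x \<in> X}" for n j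
  obtain sel where sel: "\<forall>n\<in>M. sel n \<in> psi n" "\<And>n j. j \<le> n \<Longrightarrow> hit n j \<noteq> {} \<Longrightarrow> sel n \<in> hit n j"
    using deepest_selection[of hit psi M] antimono nonempty unfolding hit_def by blast
  define good where "good j = {n\<in>M. j \<le> n \<and> hit n j \<noteq> {}}" for j
  have good_cofinite: "finite (M - good j)" for j
  proof -
    have "M - good j \<subseteq> {n\<in>M. col_of ` (psi n \<inter> W j) \<inter> X = {}} \<union> {..<j}"
      unfolding good_def hit_def by auto
    thus ?thesis using hits[of j] finite_subset by blast
  qed
  have sel_good: "sel n \<in> W j \<and> col_of (sel n) \<in> X \<and> j \<le> col_of (sel n)" if "n \<in> good j" for n j
    using sel(2)[of j n] that above unfolding good_def hit_def by blast
  have "finite {n\<in>M. sel n = x}" for x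
  proof -
    have "{n\<in>M. sel n = x} \<subseteq> M - good (Suc (col_of x))" using sel_good by fastforce
    thus ?thesis using good_cofinite finite_subset by blast
  qed
  moreover have "almost_subset (sel ` M) (W j)" for j
  proof -
    have "sel ` M - W j \<subseteq> sel ` (M - good j)" using sel_good by blast
    thus ?thesis unfolding almost_subset_def using good_cofinite finite_subset by blast
  qed
  moreover have "almost_subset (col_of ` sel ` M) X"
  proof -
    have "col_of ` sel ` M - X \<subseteq> col_of ` sel ` (M - good 0)" using sel_good by blast
    thus ?thesis unfolding almost_subset_def using good_cofinite finite_subset by blast
  qed
  ultimately show ?thesis using sel(1) by blast
qed

lemma (in p_point) select_or_refute:
  assumes P: "countable P" and cand: "lsc_candidate P B psi M" and A: "col_of ` A \<notin> U"
  shows "(\<exists>S. (\<forall>x\<in>P. almost_subset S (B x)) \<and> col_of ` S \<notin> U \<and> fto_selection psi M S) \<or>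
         (\<exists>R. col_of ` R \<notin> U \<and> A \<inter> R = {} \<and> refuted_by P B psi M (- R))"
proof -
  obtain W where antimono: "\<And>j j'. j \<le> j' \<Longrightarrow> W j' \<subseteq> W j"
    and above: "\<And>j. W j \<subseteq> {x. j \<le> col_of x}" and below: "\<And>x. x \<in> P \<Longrightarrow> \<exists>j. W j \<subseteq> B x"
    and nonempty: "\<And>j. finite {n\<in>M. psi n \<inter> W j = {}}"
    and trace: "\<And>j. \<exists>F. finite F \<and> F \<subseteq> P \<and> W j = \<Inter>(B ` F)"
    by (elim lsc_candidate_levels[OF P cand])
  define K where "K j n = col_of ` (psi n \<inter> W j)" for j n
  have K_antimono: "K j' n \<subseteq> K j n" if "j \<le> j'" for j j' n
    using antimono[OF that] unfolding K_def by blast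
  have K_above: "K j n \<subseteq> {j..}" for j n using above unfolding K_def by auto
  have K_nonempty: "finite {n\<in>M. K j n = {}}" for j
    using nonempty[of j] unfolding K_def by simp
  consider (hitting) X where "X \<notin> U" "\<And>j. finite {n\<in>M. K j n \<inter> X = {}}"
    | (thin) j J where "J \<subseteq> M" "infinite J" "(\<Union>n\<in>J. K j n) \<notin> U" "\<forall>n\<in>J. K j n \<inter> col_of ` A = {}"
    using hitting_set_or_thin_subfamily[OF A K_antimono K_above K_nonempty] by blast
  thus ?thesis
  proof cases
    case hitting
    have "\<forall>n\<in>M. psi n \<noteq> {}" using cand unfolding lsc_candidate_def by blast
    then obtain sel where sel: "\<forall>n\<in>M. sel n \<in> psi n" "\<forall>x. finite {n\<in>M. sel n = x}"
      "\<forall>j. almost_subset (sel ` M) (W j)" "almost_subset (col_of ` sel ` M) X"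
      using selection_from_hitting_set[OF antimono above, of M psi X] hitting(2)
      unfolding K_def by blast
    have "almost_subset (sel ` M) (B x)" if "x \<in> P" for x
      using below[OF that] sel(3) almost_subset_subset_right by blast
    moreover have "col_of ` sel ` M \<notin> U" using almost_subset_notin[OF sel(4) hitting(1)] .
    moreover have "fto_selection psi M (sel ` M)" unfolding fto_selection_def using sel(1,2) by blast
    ultimately show ?thesis by blast
  next
    case thin
    define R where "R = (\<Union>n\<in>J. psi n \<inter> W j)"
    obtain F where F: "finite F" "F \<subseteq> P" "W j = \<Inter>(B ` F)" using trace[of j] by blast
    have "col_of ` R = (\<Union>n\<in>J. K j n)" unfolding R_def K_def by blast
    hence "col_of ` R \<notin> U" using thin(3) by simp
    moreover have "A \<inter> R = {}" using thin(4) unfolding R_def K_def by blast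
    moreover have "refuted_by P B psi M (- R)"
      unfolding refuted_by_def
    proof (intro exI[of _ F] exI[of _ J] conjI ballI)
      show "psi n \<inter> - R \<inter> \<Inter>(B ` F) = {}" if "n \<in> J" for n
        using that F(3) unfolding R_def by blast
    qed (use F thin(1,2) in auto)
    ultimately show ?thesis by blast
  qed
qed

section \<open>One stage of the construction\<close>

context free_ultrafilter
begin

lemma large_columns_Int_or_escape:
  assumes large: "large_columns B"
  shows "large_columns (B \<inter> E) \<or> (\<exists>D\<subseteq>B - E. infinite D \<and> col_of ` D \<notin> U)"
proof (cases "large_columns (B \<inter> E)")
  case False
  then obtain m where m: "{n. m \<le> col_size (B \<inter> E) n} \<notin> U" unfolding large_columns_def by blast
  define S where "S = - {n. m \<le> col_size (B \<inter> E) n} \<inter> {n. Suc m \<le> col_size B n}"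
  have "S \<in> U" unfolding S_def using m large notin_iff_Compl_in Int_in unfolding large_columns_def by blast
  then obtain S' where S': "S' \<subseteq> S" "infinite S'" "S' \<notin> U"
    using infinite_subset_notin infinite_if_in by blast
  have "(B - E) \<inter> grid_column n \<noteq> {}" if n: "n \<in> S" for n
  proof
    assume "(B - E) \<inter> grid_column n = {}"
    hence "B \<inter> grid_column n = (B \<inter> E) \<inter> grid_column n" by blast
    hence "col_size B n = col_size (B \<inter> E) n" unfolding col_size_def by simp
    thus False using n unfolding S_def by auto
  qed
  hence "\<forall>n\<in>S'. \<exists>x. x \<in> (B - E) \<inter> grid_column n" using S'(1) by blast
  then obtain d where d: "\<And>n. n \<in> S' \<Longrightarrow> d n \<in> (B - E) \<inter> grid_column n" by metis
  have "col_of ` d ` S' = S'" using d by force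
  hence "infinite (d ` S') \<and> col_of ` d ` S' \<notin> U" using S'(2,3) by (metis finite_imageI)
  moreover have "d ` S' \<subseteq> B - E" using d by blast
  ultimately show ?thesis by blast
qed simp

lemma decide_superset_step:
  assumes AB: "almost_subset A B" "col_of ` A \<notin> U" "large_columns B"
  shows "\<exists>A' B'. A \<subseteq> A' \<and> B' \<subseteq> B \<and> A' - A \<subseteq> B \<and> almost_subset A' B' \<and> col_of ` A' \<notin> U \<and>
    large_columns B' \<and> (almost_subset B' E \<or> \<not> almost_subset A' E)"
proof (cases "almost_subset A E")
  case False
  thus ?thesis using AB by (intro exI[of _ A] exI[of _ B]) auto
next
  case AE: True
  from large_columns_Int_or_escape[OF AB(3), of E] show ?thesis
  proof
    assume "large_columns (B \<inter> E)"
    moreover have "almost_subset A (B \<inter> E)" using almost_subset_Int[OF AB(1) AE] .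
    ultimately show ?thesis
      using AB(2) by (intro exI[of _ A] exI[of _ "B \<inter> E"]) (auto intro: subset_imp_almost_subset)
  next
    assume "\<exists>D\<subseteq>B - E. infinite D \<and> col_of ` D \<notin> U"
    then obtain D where D: "D \<subseteq> B - E" "infinite D" "col_of ` D \<notin> U" by blast
    have "almost_subset (A \<union> D) B" using AB(1) D(1) almost_subset_Un subset_imp_almost_subset by blast
    moreover have "col_of ` (A \<union> D) \<notin> U" using Un_notin[OF AB(2) D(3)] by (simp add: image_Un)
    moreover have "\<not> almost_subset (A \<union> D) E"
    proof
      assume "almost_subset (A \<union> D) E"
      hence "finite (D - E)" unfolding almost_subset_def by (rule finite_subset[rotated]) blast
      moreover have "D - E = D" using D(1) by blast
      ultimately show False using D(2) by simp
    qed
    ultimately show ?thesis using AB(3) D(1) by (intro exI[of _ "A \<union> D"] exI[of _ B]) auto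
  qed
qed

lemma trim_step:
  fixes f :: "nat \<Rightarrow> nat"
  assumes cf: "column_finite B" and large: "large_columns B"
    and AB: "almost_subset A B" and A: "col_of ` A \<notin> U"
  shows "\<exists>B'\<subseteq>B. almost_subset A B' \<and> large_columns B' \<and> B' \<inter> grid_column c = {} \<and>
    {n. cell n (f n) \<in> B'} \<notin> U \<and> (col_of ` E \<in> U \<longrightarrow> \<not> almost_subset E B')"
proof -
  define Y where "Y = - col_of ` A"
  have Y: "Y \<in> U" using A notin_iff_Compl_in unfolding Y_def by blast
  have "\<forall>n\<in>col_of ` E. \<exists>x. x \<in> E \<inter> grid_column n" by force
  from bchoice[OF this] obtain e where e: "\<forall>n\<in>col_of ` E. e n \<in> E \<inter> grid_column n" by blast
  \<comment> \<open>at most two points are removed from each column, all of them in columns missed by A\<close>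
  define R where "R = (\<lambda>n. cell n (f n)) ` Y \<union> e ` (Y \<inter> col_of ` E)"
  define B' where "B' = B - R - grid_column c"
  have R_col: "R \<inter> grid_column n \<subseteq> {cell n (f n), e n}" for n
    unfolding R_def using e by auto
  have "finite (R \<inter> grid_column n) \<and> card (R \<inter> grid_column n) \<le> 2" for n
  proof -
    have "card {cell n (f n), e n} \<le> 2" by (simp add: card_insert_le_m1)
    thus ?thesis using R_col[of n] by (meson card_mono finite.emptyI finite.insertI finite_subset le_trans)
  qed
  hence "large_columns B'"
    unfolding B'_def using large_columns_Diff_bounded[OF cf large] large_columns_Diff_column by blast
  moreover have "col_of x \<in> Y" if "x \<in> R" for x using that e unfolding R_def by auto
  hence "A \<inter> R = {}" unfolding Y_def by blast
  hence "A - B' \<subseteq> (A - B) \<union> (A \<inter> grid_column c)" unfolding B'_def by blast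
  hence "almost_subset A B'"
    using AB column_finite_almost_subset[OF cf AB] unfolding almost_subset_def column_finite_def
    by (meson finite_Un finite_subset)
  moreover have "{n. cell n (f n) \<in> B'} \<notin> U"
  proof -
    have "{n. cell n (f n) \<in> B'} \<subseteq> - Y" unfolding B'_def R_def by auto
    thus ?thesis using Y notin_iff_Compl_in subset_notin by (metis double_compl)
  qed
  moreover have "\<not> almost_subset E B'" if "col_of ` E \<in> U"
  proof -
    have col_e: "col_of (e n) = n" if "n \<in> Y \<inter> col_of ` E" for n using e that by auto
    have "col_of ` e ` (Y \<inter> col_of ` E) = Y \<inter> col_of ` E"
    proof
      show "Y \<inter> col_of ` E \<subseteq> col_of ` e ` (Y \<inter> col_of ` E)"
      proof
        fix n assume n: "n \<in> Y \<inter> col_of ` E"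
        hence "n = col_of (e n)" using col_e by simp
        thus "n \<in> col_of ` e ` (Y \<inter> col_of ` E)" using n by blast
      qed
    qed (use col_e in auto)
    moreover have "Y \<inter> col_of ` E \<in> U" using Y that Int_in by blast
    ultimately have "infinite (e ` (Y \<inter> col_of ` E))" using infinite_if_in by (metis finite_imageI)
    moreover have "e ` (Y \<inter> col_of ` E) \<subseteq> E - B'" unfolding B'_def R_def using e by auto
    ultimately show ?thesis unfolding almost_subset_def using finite_subset by blast
  qed
  moreover have "B' \<subseteq> B" "B' \<inter> grid_column c = {}" unfolding B'_def by auto
  ultimately show ?thesis by blast
qed

end

context p_point
begin

definition working_pair :: "nat set set \<Rightarrow> (nat set \<Rightarrow> nat set) \<Rightarrow> nat set \<Rightarrow> nat set \<Rightarrow> bool" where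
  "working_pair P B A' B' \<longleftrightarrow> almost_subset A' B' \<and> col_of ` A' \<notin> U \<and> large_columns B' \<and>
     almost_subset B' grid_triangle \<and> (\<forall>x\<in>P. almost_subset B' (B x))"

lemma working_pair_column_finite: "working_pair P B A' B' \<Longrightarrow> column_finite B'"
  unfolding working_pair_def using column_finite_almost_subset column_finite_grid_triangle by blast

lemma candidate_step:
  assumes P: "countable P" and BP: "\<forall>x\<in>P. B x \<subseteq> grid_triangle" and wp: "working_pair P B A1 B1"
  shows "\<exists>A2 B2. A1 \<subseteq> A2 \<and> working_pair P B A2 B2 \<and>
    (lsc_candidate P B psi M \<longrightarrow> fto_selection psi M A2 \<or> refuted_by P B psi M B2)"
proof (cases "lsc_candidate P B psi M")
  case cand: True
  have AB1: "almost_subset A1 B1" "col_of ` A1 \<notin> U" "large_columns B1" "almost_subset B1 grid_triangle"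
    "\<forall>x\<in>P. almost_subset B1 (B x)"
    using wp unfolding working_pair_def by blast+
  from select_or_refute[OF P cand AB1(2)] show ?thesis
  proof (elim disjE exE conjE)
    fix S assume S: "\<forall>x\<in>P. almost_subset S (B x)" "col_of ` S \<notin> U" "fto_selection psi M S"
    obtain x where "x \<in> P" using cand unfolding lsc_candidate_def by blast
    hence S_tri: "almost_subset S grid_triangle" using S(1) BP almost_subset_subset_right by blast
    have "large_columns (B1 \<union> S)"
      using large_columns_mono[OF _ AB1(3)] column_finite_almost_subset column_finite_grid_triangle
        almost_subset_Un[OF AB1(4) S_tri] by blast
    moreover have "almost_subset (A1 \<union> S) (B1 \<union> S)"
      using AB1(1) almost_subset_Un almost_subset_subset_right by (meson Un_upper1 Un_upper2 almost_subset_refl)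
    moreover have "col_of ` (A1 \<union> S) \<notin> U" using Un_notin[OF AB1(2) S(2)] by (simp add: image_Un)
    ultimately have "working_pair P B (A1 \<union> S) (B1 \<union> S)"
      unfolding working_pair_def using AB1(4,5) S(1) S_tri almost_subset_Un by blast
    moreover have "fto_selection psi M (A1 \<union> S)" using fto_selection_mono[OF S(3)] by blast
    ultimately show ?thesis by blast
  next
    fix R assume R: "col_of ` R \<notin> U" "A1 \<inter> R = {}" "refuted_by P B psi M (- R)"
    have "A1 - (B1 - R) \<subseteq> A1 - B1" using R(2) by blast
    hence "almost_subset A1 (B1 - R)" using AB1(1) unfolding almost_subset_def using finite_subset by blast
    moreover have "large_columns (B1 - R)" using large_columns_Diff_columns[OF AB1(3) R(1)] .
    ultimately have "working_pair P B A1 (B1 - R)"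
      unfolding working_pair_def using AB1 almost_subset_subset_left[of "B1 - R" B1] by blast
    moreover have "refuted_by P B psi M (B1 - R)" using refuted_by_mono[OF R(3)] by blast
    ultimately show ?thesis by blast
  qed
qed (use wp in blast)

lemma superset_step:
  assumes wp: "working_pair P B A2 B2"
  shows "\<exists>A3 B3. A2 \<subseteq> A3 \<and> B3 \<subseteq> B2 \<and> working_pair P B A3 B3 \<and>
    (almost_subset B3 E \<or> \<not> almost_subset A3 E)"
proof -
  have AB: "almost_subset A2 B2" "col_of ` A2 \<notin> U" "large_columns B2"
    using wp unfolding working_pair_def by blast+
  obtain A3 B3 where AB3: "A2 \<subseteq> A3" "B3 \<subseteq> B2" "almost_subset A3 B3" "col_of ` A3 \<notin> U"
    "large_columns B3" "almost_subset B3 E \<or> \<not> almost_subset A3 E"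
    using decide_superset_step[OF AB, of E] by blast
  have "working_pair P B A3 B3"
    using wp AB3(2-5) almost_subset_subset_left[OF AB3(2)] unfolding working_pair_def by blast
  thus ?thesis using AB3 by blast
qed


lemma working_pair_start:
  assumes A1: "almost_subset A1 grid_triangle" "\<forall>x\<in>P. almost_subset A1 (B x)" "col_of ` A1 \<notin> U"
    and G: "large_columns G" "G \<subseteq> grid_triangle" "\<forall>x\<in>P. almost_subset G (B x)"
  shows "working_pair P B A1 (G \<union> A1)"
proof -
  have tri: "almost_subset (G \<union> A1) grid_triangle"
    using almost_subset_Un[OF subset_imp_almost_subset[OF G(2)] A1(1)] .
  show ?thesis
    unfolding working_pair_def
  proof (intro conjI ballI)
    show "large_columns (G \<union> A1)"
      using large_columns_mono[OF _ G(1)] column_finite_almost_subset[OF column_finite_grid_triangle tri]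
      by blast
    show "almost_subset (G \<union> A1) (B x)" if "x \<in> P" for x
      using almost_subset_Un G(3) A1(2) that by blast
  qed (use A1 tri in \<open>auto intro: subset_imp_almost_subset\<close>)
qed

lemma working_pair_trim:
  assumes wp: "working_pair P B A1 B1"
  shows "\<exists>B2\<subseteq>B1 \<inter> grid_triangle. almost_subset A1 B2 \<and> large_columns B2 \<and> B2 \<inter> grid_column c = {} \<and>
    {n. cell n (f n) \<in> B2} \<notin> U \<and> (col_of ` E \<in> U \<longrightarrow> \<not> almost_subset E B2)"
proof -
  have AB: "almost_subset A1 B1" "col_of ` A1 \<notin> U" "large_columns B1" "almost_subset B1 grid_triangle"
    using wp unfolding working_pair_def by blast+
  have "large_columns (B1 \<inter> grid_triangle)"
    using large_columns_Diff_finite[OF working_pair_column_finite[OF wp] AB(3), of "B1 - grid_triangle"]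
      AB(4) unfolding almost_subset_def by (simp add: Diff_Diff_Int)
  moreover have "almost_subset A1 (B1 \<inter> grid_triangle)"
    using almost_subset_Int[OF AB(1) almost_subset_trans[OF AB(1,4)]] .
  moreover have "column_finite (B1 \<inter> grid_triangle)"
    using column_finite_subset[OF column_finite_grid_triangle] by blast
  ultimately show ?thesis using trim_step[OF _ _ _ AB(2)] by blast
qed


lemma interpolants_of_pairs:
  fixes S :: "(nat set \<times> nat set) set"
  assumes S: "countable S" "S \<noteq> {}"
    and cross: "\<And>a b a' b'. (a, b) \<in> S \<Longrightarrow> (a', b') \<in> S \<Longrightarrow> almost_subset a b'"
    and pairs: "\<And>a b. (a, b) \<in> S \<Longrightarrow> col_of ` a \<notin> U \<and> b \<subseteq> grid_triangle \<and> large_columns b"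
    and chain: "almost_chain (snd ` S)"
  shows "\<exists>C G. (\<forall>(a, b)\<in>S. almost_subset a C \<and> almost_subset C b \<and> almost_subset G b) \<and>
    col_of ` C \<notin> U \<and> large_columns G \<and> C \<subseteq> grid_triangle \<and> G \<subseteq> grid_triangle"
proof -
  define a where "a i = fst (from_nat_into S i)" for i
  define b where "b i = snd (from_nat_into S i)" for i
  have ab: "(a i, b i) \<in> S" for i
    unfolding a_def b_def using from_nat_into[OF S(2)] by simp
  have onto: "\<exists>i. a i = a' \<and> b i = b'" if "(a', b') \<in> S" for a' b'
    using from_nat_into_surj[OF S(1) that] unfolding a_def b_def by (metis fst_conv snd_conv)
  have "almost_chain (range b)"
    using chain ab unfolding almost_chain_def by (metis image_eqI rangeE snd_conv)
  moreover have b_cf: "column_finite (b k)" for k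
    using pairs[OF ab] column_finite_subset column_finite_grid_triangle by blast
  ultimately obtain G where G: "\<forall>k. almost_subset G (b k)" "large_columns G" "G \<subseteq> b 0"
    using large_columns_pseudo_intersection pairs[OF ab] by blast
  have a_notin: "col_of ` a i \<notin> U" for i using pairs[OF ab] by blast
  from interpolation[of a b, OF cross[OF ab ab] a_notin b_cf[of 0]]
  obtain C where C: "\<forall>i. almost_subset (a i) C" "\<forall>k. almost_subset C (b k)" "col_of ` C \<notin> U"
    "C \<subseteq> b 0"
    by blast
  have "almost_subset a' C \<and> almost_subset C b' \<and> almost_subset G b'" if "(a', b') \<in> S" for a' b'
    using onto[OF that] C(1,2) G(1) by (metis (no_types))
  moreover have "C \<subseteq> grid_triangle" "G \<subseteq> grid_triangle" using C(4) G(3) pairs[OF ab] by auto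
  ultimately show ?thesis using C(3) G(2) by blast
qed

end

locale gap_parameters = p_point +
  fixes Q :: "nat set"
  assumes Q_notin: "Q \<notin> U" and infinite_Q: "infinite Q"
begin

definition stage_inv :: "nat set \<Rightarrow> nat set \<Rightarrow> bool" where
  "stage_inv A B \<longleftrightarrow> almost_subset (bottom_row Q) A \<and> B \<subseteq> grid_triangle \<and> almost_subset A B \<and>
     col_of ` A \<notin> U \<and> large_columns B"

definition good_history :: "nat set set \<Rightarrow> (nat set \<Rightarrow> nat set) \<Rightarrow> (nat set \<Rightarrow> nat set) \<Rightarrow> bool" where
  "good_history P A B \<longleftrightarrow> countable P \<and> (\<forall>x\<in>P. stage_inv (A x) (B x)) \<and>
     (\<forall>x\<in>P. \<forall>y\<in>P. almost_subset (A x) (B y)) \<and> almost_chain (B ` P)"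

lemma history_interpolants:
  assumes "good_history P A B"
  shows "\<exists>C G. (\<forall>x\<in>P. almost_subset (A x) C \<and> almost_subset C (B x) \<and> almost_subset G (B x)) \<and>
    almost_subset (bottom_row Q) C \<and> col_of ` C \<notin> U \<and> large_columns G \<and> C \<subseteq> grid_triangle \<and> G \<subseteq> grid_triangle"
proof -
  have P: "countable P" and inv: "\<And>x. x \<in> P \<Longrightarrow> stage_inv (A x) (B x)"
    and AB: "\<And>x y. x \<in> P \<Longrightarrow> y \<in> P \<Longrightarrow> almost_subset (A x) (B y)" and chain: "almost_chain (B ` P)"
    using assms unfolding good_history_def by blast+
  define S where "S = insert (bottom_row Q, grid_triangle) ((\<lambda>x. (A x, B x)) ` P)"
  have "countable S" "S \<noteq> {}" unfolding S_def using P by auto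
  moreover have "almost_subset a b'" if "(a, b) \<in> S" "(a', b') \<in> S" for a b a' b'
  proof -
    have "almost_subset (bottom_row Q) (B y)" if "y \<in> P" for y
      using inv[OF that] almost_subset_trans unfolding stage_inv_def by blast
    moreover have "almost_subset (A x) grid_triangle" if "x \<in> P" for x
      using inv[OF that] almost_subset_subset_right unfolding stage_inv_def by blast
    ultimately show ?thesis
      using that AB bottom_row_subset_grid_triangle subset_imp_almost_subset unfolding S_def by auto
  qed
  moreover have "col_of ` a \<notin> U \<and> b \<subseteq> grid_triangle \<and> large_columns b" if "(a, b) \<in> S" for a b
    using that inv Q_notin col_of_bottom_row large_columns_grid_triangle unfolding S_def stage_inv_def by auto
  moreover have "almost_chain (snd ` S)"
    using chain inv subset_imp_almost_subset unfolding S_def almost_chain_def stage_inv_def by auto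
  ultimately have "\<exists>C G. (\<forall>(a, b)\<in>S. almost_subset a C \<and> almost_subset C b \<and> almost_subset G b) \<and>
      col_of ` C \<notin> U \<and> large_columns G \<and> C \<subseteq> grid_triangle \<and> G \<subseteq> grid_triangle"
    by (rule interpolants_of_pairs)
  thus ?thesis unfolding S_def by auto
qed

text \<open>Besides lying between the earlier stages, the next stage settles E for both tightness
  conditions, kills n \<mapsto> cell n (f n) as a selection of the column map on Y_U, avoids column c
  (so that columns are closed in the gap space), and either admits a finite-to-one selection of the
  candidate map (psi, M) or refutes its lower semicontinuity.\<close>

definition next_stage :: "nat set set \<Rightarrow> (nat set \<Rightarrow> nat set) \<Rightarrow> (nat set \<Rightarrow> nat set) \<Rightarrow>
    nat set \<Rightarrow> (nat \<Rightarrow> nat) \<Rightarrow> (nat \<Rightarrow> nat set) \<Rightarrow> nat set \<Rightarrow> nat \<Rightarrow> nat set \<Rightarrow> nat set \<Rightarrow> bool" where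
  "next_stage P A B E f psi M c A' B' \<longleftrightarrow>
    (\<forall>x\<in>P. almost_subset (A x) A' \<and> almost_subset A' (B x) \<and> almost_subset B' (B x)) \<and>
    stage_inv A' B' \<and>
    ((\<forall>x\<in>P. almost_subset E (B x)) \<and> almost_subset E grid_triangle \<longrightarrow>
       almost_subset E A' \<or> \<not> almost_subset E B') \<and>
    (almost_subset B' E \<or> \<not> almost_subset A' E) \<and>
    {n. cell n (f n) \<in> B'} \<notin> U \<and>
    B' \<inter> grid_column c = {} \<and>
    (lsc_candidate P B psi M \<longrightarrow> fto_selection psi M A' \<or> refuted_by P B psi M B')"

lemma next_stage_exists:
  assumes hist: "good_history P A B"
  shows "\<exists>A' B'. next_stage P A B E f psi M c A' B'"
proof -
  obtain C G where CG: "\<forall>x\<in>P. almost_subset (A x) C \<and> almost_subset C (B x) \<and> almost_subset G (B x)"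
    "almost_subset (bottom_row Q) C" "col_of ` C \<notin> U" "large_columns G" "C \<subseteq> grid_triangle"
    "G \<subseteq> grid_triangle"
    using history_interpolants[OF hist] by blast
  have P: "countable P" and BP: "\<forall>x\<in>P. B x \<subseteq> grid_triangle"
    using hist unfolding good_history_def stage_inv_def by blast+
  define absorb where "absorb \<longleftrightarrow> (\<forall>x\<in>P. almost_subset E (B x)) \<and> almost_subset E grid_triangle \<and>
    col_of ` E \<notin> U"
  define A1 where "A1 = C \<union> (if absorb then E else {})"
  have "almost_subset A1 grid_triangle" "\<forall>x\<in>P. almost_subset A1 (B x)" "col_of ` A1 \<notin> U"
    using CG almost_subset_Un subset_imp_almost_subset Un_notin finite_notin[of "{}"]
    unfolding A1_def absorb_def by (auto simp: image_Un)
  hence "working_pair P B A1 (G \<union> A1)" using working_pair_start CG by blast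
  then obtain A2 B2 where AB2: "A1 \<subseteq> A2" "working_pair P B A2 B2"
    "lsc_candidate P B psi M \<longrightarrow> fto_selection psi M A2 \<or> refuted_by P B psi M B2"
    using candidate_step[OF P BP] by blast
  obtain A3 B3 where AB3: "A2 \<subseteq> A3" "B3 \<subseteq> B2" "working_pair P B A3 B3"
    "almost_subset B3 E \<or> \<not> almost_subset A3 E"
    using superset_step[OF AB2(2)] by blast
  obtain B' where B': "B' \<subseteq> B3 \<inter> grid_triangle" "almost_subset A3 B'" "large_columns B'"
    "B' \<inter> grid_column c = {}" "{n. cell n (f n) \<in> B'} \<notin> U" "col_of ` E \<in> U \<longrightarrow> \<not> almost_subset E B'"
    using working_pair_trim[OF AB3(3), of c f E] by blast
  have wp3: "almost_subset A3 B3" "col_of ` A3 \<notin> U" "\<forall>x\<in>P. almost_subset B3 (B x)"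
    using AB3(3) unfolding working_pair_def by blast+
  have C_A3: "C \<subseteq> A3" using AB2(1) AB3(1) unfolding A1_def by blast
  have "next_stage P A B E f psi M c A3 B'"
    unfolding next_stage_def stage_inv_def
  proof (intro conjI ballI impI)
    fix x assume "x \<in> P"
    thus "almost_subset (A x) A3" "almost_subset A3 (B x)" "almost_subset B' (B x)"
      using CG(1) C_A3 wp3 B'(1) almost_subset_subset_right almost_subset_subset_left almost_subset_trans
      by (meson le_inf_iff)+
  next
    assume E: "(\<forall>x\<in>P. almost_subset E (B x)) \<and> almost_subset E grid_triangle"
    show "almost_subset E A3 \<or> \<not> almost_subset E B'"
    proof (cases "col_of ` E \<in> U")
      case False
      hence "E \<subseteq> A3" using E AB2(1) AB3(1) unfolding A1_def absorb_def by auto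
      thus ?thesis using subset_imp_almost_subset by blast
    qed (use B'(6) in blast)
  next
    show "almost_subset B' E \<or> \<not> almost_subset A3 E"
      using AB3(4) B'(1) almost_subset_subset_left by (meson le_inf_iff)
    show "lsc_candidate P B psi M \<Longrightarrow> fto_selection psi M A3 \<or> refuted_by P B psi M B'"
      using AB2(3) AB3(1,2) B'(1) fto_selection_mono refuted_by_mono by (meson le_inf_iff subset_trans)
    show "almost_subset (bottom_row Q) A3" using CG(2) C_A3 almost_subset_subset_right by blast
  qed (use B' wp3 in auto)
  thus ?thesis by blast
qed

end

definition gap_nbhd :: "(nat set \<Rightarrow> nat set) \<Rightarrow> nat set set \<Rightarrow> nat option set" where
  "gap_nbhd B F = (\<Inter>a\<in>F. insert None (Some ` B a))"

definition basic_index :: "nat set set \<Rightarrow> bool" where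
  "basic_index F \<longleftrightarrow> finite F \<and> F \<noteq> {} \<and> F \<subseteq> Field omega1"

lemma Some_in_gap_nbhd_iff [simp]: "Some x \<in> gap_nbhd B F \<longleftrightarrow> x \<in> \<Inter>(B ` F)"
  unfolding gap_nbhd_def by blast

lemma None_in_gap_nbhd [simp]: "None \<in> gap_nbhd B F"
  unfolding gap_nbhd_def by blast

lemma basic_index_singleton: "a \<in> Field omega1 \<Longrightarrow> basic_index {a}"
  unfolding basic_index_def by simp

lemma openin_gap_space:
  "openin (gap_space B) V \<longleftrightarrow> (None \<in> V \<longrightarrow> (\<exists>F. basic_index F \<and> gap_nbhd B F \<subseteq> V))"
proof -
  have "istopology (\<lambda>V. None \<in> V \<longrightarrow> (\<exists>F. basic_index F \<and> gap_nbhd B F \<subseteq> V))"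
    unfolding istopology_def
  proof (intro conjI allI impI)
    fix S T
    assume "None \<in> S \<longrightarrow> (\<exists>F. basic_index F \<and> gap_nbhd B F \<subseteq> S)"
      "None \<in> T \<longrightarrow> (\<exists>F. basic_index F \<and> gap_nbhd B F \<subseteq> T)" "None \<in> S \<inter> T"
    then obtain F1 F2 where "basic_index F1" "gap_nbhd B F1 \<subseteq> S" "basic_index F2" "gap_nbhd B F2 \<subseteq> T"
      by blast
    moreover have "gap_nbhd B (F1 \<union> F2) = gap_nbhd B F1 \<inter> gap_nbhd B F2" unfolding gap_nbhd_def by blast
    ultimately show "\<exists>F. basic_index F \<and> gap_nbhd B F \<subseteq> S \<inter> T"
      unfolding basic_index_def by (intro exI[of _ "F1 \<union> F2"]) auto
  qed blast
  moreover have "gap_space B = topology (\<lambda>V. None \<in> V \<longrightarrow> (\<exists>F. basic_index F \<and> gap_nbhd B F \<subseteq> V))"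
    unfolding gap_space_def basic_index_def gap_nbhd_def by (simp add: conj_assoc)
  ultimately show ?thesis by simp
qed

lemma topspace_gap_space [simp]: "topspace (gap_space B) = UNIV"
proof -
  obtain a where "a \<in> Field omega1" using Field_omega1_nonempty by blast
  hence "openin (gap_space B) UNIV" unfolding openin_gap_space using basic_index_singleton by blast
  thus ?thesis using openin_subset by blast
qed

lemma openin_gap_nbhd: "basic_index F \<Longrightarrow> openin (gap_space B) (gap_nbhd B F)"
  unfolding openin_gap_space by blast

lemma openin_filter_space:
  assumes "UNIV \<in> V" "\<And>A B. A \<in> V \<Longrightarrow> B \<in> V \<Longrightarrow> A \<inter> B \<in> V"
  shows "openin (filter_space V) W \<longleftrightarrow> (None \<in> W \<longrightarrow> (\<exists>A\<in>V. insert None (Some ` A) \<subseteq> W))"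
proof -
  have "istopology (\<lambda>W. None \<in> W \<longrightarrow> (\<exists>A\<in>V. insert None (Some ` A) \<subseteq> W))"
    unfolding istopology_def
  proof (intro conjI allI impI)
    fix S T
    assume "None \<in> S \<longrightarrow> (\<exists>A\<in>V. insert None (Some ` A) \<subseteq> S)"
      "None \<in> T \<longrightarrow> (\<exists>A\<in>V. insert None (Some ` A) \<subseteq> T)" "None \<in> S \<inter> T"
    then obtain A1 A2 where "A1 \<in> V" "insert None (Some ` A1) \<subseteq> S" "A2 \<in> V" "insert None (Some ` A2) \<subseteq> T"
      by blast
    thus "\<exists>A\<in>V. insert None (Some ` A) \<subseteq> S \<inter> T"
      using assms(2) by (intro bexI[of _ "A1 \<inter> A2"]) auto
  next
    fix K :: "nat option set set"
    assume K: "\<forall>S\<in>K. None \<in> S \<longrightarrow> (\<exists>A\<in>V. insert None (Some ` A) \<subseteq> S)" and "None \<in> \<Union>K"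
    then obtain S A where "S \<in> K" "A \<in> V" "insert None (Some ` A) \<subseteq> S" by blast
    thus "\<exists>A\<in>V. insert None (Some ` A) \<subseteq> \<Union>K" by blast
  qed
  thus ?thesis unfolding filter_space_def by simp
qed

lemma topspace_filter_space:
  assumes "UNIV \<in> V" "\<And>A B. A \<in> V \<Longrightarrow> B \<in> V \<Longrightarrow> A \<inter> B \<in> V"
  shows "topspace (filter_space V) = UNIV"
proof -
  have "openin (filter_space V) UNIV" using assms(1) by (subst openin_filter_space[OF assms]) auto
  thus ?thesis using openin_subset by blast
qed

lemma openin_conv_seq:
  "openin conv_seq W \<longleftrightarrow> (None \<in> W \<longrightarrow> (\<exists>A. finite (- A) \<and> insert None (Some ` A) \<subseteq> W))"
  unfolding conv_seq_def by (subst openin_filter_space) auto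

lemma topspace_conv_seq [simp]: "topspace conv_seq = UNIV"
  unfolding conv_seq_def by (rule topspace_filter_space) auto

lemma (in free_ultrafilter) openin_filter_space_U:
  "openin (filter_space U) W \<longleftrightarrow> (None \<in> W \<longrightarrow> (\<exists>A\<in>U. insert None (Some ` A) \<subseteq> W))"
  using openin_filter_space UNIV_in Int_in by blast

lemma (in free_ultrafilter) topspace_filter_space_U [simp]: "topspace (filter_space U) = UNIV"
  using topspace_filter_space UNIV_in Int_in by blast

lemma continuous_map_UNIV:
  "topspace X = UNIV \<Longrightarrow> topspace Y = UNIV \<Longrightarrow>
    continuous_map Y X s \<longleftrightarrow> (\<forall>V. openin X V \<longrightarrow> openin Y (s -` V))"
  unfolding continuous_map_def vimage_def by auto

lemma closedin_UNIV: "topspace X = UNIV \<Longrightarrow> closedin X S \<longleftrightarrow> openin X (- S)"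
  unfolding closedin_def by (simp add: Compl_eq_Diff_UNIV)

section \<open>The gap space is not selective for the P-point\<close>

definition column_map :: "nat option \<Rightarrow> nat option set" where
  "column_map y = (case y of None \<Rightarrow> {None} | Some n \<Rightarrow> Some ` grid_column n)"

lemma column_map_nonempty: "column_map y \<noteq> {}"
  unfolding column_map_def using grid_column_nonempty by (cases y) auto

lemma closedin_column_map:
  assumes avoid: "\<And>k. \<exists>a\<in>Field omega1. B a \<inter> grid_column k = {}"
  shows "closedin (gap_space B) (column_map y)"
proof (cases y)
  case None
  have "openin (gap_space B) (- {None})" unfolding openin_gap_space by blast
  thus ?thesis using None closedin_UNIV[OF topspace_gap_space] unfolding column_map_def by simp
next
  case (Some n)
  obtain a where a: "a \<in> Field omega1" "B a \<inter> grid_column n = {}" using avoid by blast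
  have "gap_nbhd B {a} \<subseteq> - (Some ` grid_column n)" using a(2) unfolding gap_nbhd_def by auto
  hence "openin (gap_space B) (- (Some ` grid_column n))"
    unfolding openin_gap_space using basic_index_singleton[OF a(1)] by blast
  thus ?thesis using Some closedin_UNIV[OF topspace_gap_space] unfolding column_map_def by simp
qed

lemma (in free_ultrafilter) lsc_column_map:
  assumes avoid: "\<And>k. \<exists>a\<in>Field omega1. B a \<inter> grid_column k = {}"
    and large: "\<And>a. a \<in> Field omega1 \<Longrightarrow> large_columns (B a) \<and> column_finite (B a)"
    and chain: "\<And>a b. a \<in> Field omega1 \<Longrightarrow> b \<in> underS omega1 a \<Longrightarrow> almost_subset (B a) (B b)"
  shows "lsc (filter_space U) (gap_space B) column_map"
  unfolding lsc_def
proof (intro conjI allI impI ballI)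
  fix y :: "nat option"
  show "column_map y \<noteq> {}" "closedin (gap_space B) (column_map y)"
    using column_map_nonempty closedin_column_map[OF avoid] by blast+
next
  fix W assume W: "openin (gap_space B) W"
  show "openin (filter_space U) {y \<in> topspace (filter_space U). column_map y \<inter> W \<noteq> {}}"
    unfolding openin_filter_space_U
  proof
    assume "None \<in> {y \<in> topspace (filter_space U). column_map y \<inter> W \<noteq> {}}"
    hence "None \<in> W" unfolding column_map_def by auto
    then obtain F where F: "basic_index F" "gap_nbhd B F \<subseteq> W" using W unfolding openin_gap_space by blast
    have F': "finite F" "F \<noteq> {}" "F \<subseteq> Field omega1" using F(1) unfolding basic_index_def by blast+
    obtain m where m: "m \<in> F" "\<forall>a\<in>F. a = m \<or> a \<in> underS omega1 m"
      using finite_has_max_omega1[OF F'] by blast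
    have mF: "m \<in> Field omega1" using m(1) F'(3) by blast
    \<comment> \<open>B m is almost contained in the neighbourhood, so U-many of its columns meet it\<close>
    define K where "K = (\<Union>a\<in>F. B m - B a)"
    have "finite (B m - B a)" if "a \<in> F" for a
      using m(2) that chain[OF mF] unfolding almost_subset_def by (cases "a = m") auto
    hence "finite K" unfolding K_def using F'(1) by blast
    hence "{n. (B m - K) \<inter> grid_column n \<noteq> {}} \<in> U"
      using large_columns_nonempty_columns large[OF mF] by blast
    moreover have "insert None (Some ` {n. (B m - K) \<inter> grid_column n \<noteq> {}}) \<subseteq>
        {y \<in> topspace (filter_space U). column_map y \<inter> W \<noteq> {}}"
    proof
      fix y assume y: "y \<in> insert None (Some ` {n. (B m - K) \<inter> grid_column n \<noteq> {}})"
      show "y \<in> {y \<in> topspace (filter_space U). column_map y \<inter> W \<noteq> {}}"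
      proof (cases y)
        case None thus ?thesis using \<open>None \<in> W\<close> unfolding column_map_def by auto
      next
        case (Some n)
        hence "(B m - K) \<inter> grid_column n \<noteq> {}" using y by auto
        then obtain x where x: "x \<in> (B m - K) \<inter> grid_column n" by blast
        hence "x \<in> \<Inter>(B ` F)" unfolding K_def by blast
        hence "Some x \<in> W" using F(2) by auto
        moreover have "Some x \<in> column_map y" using Some x unfolding column_map_def by auto
        ultimately show ?thesis by auto
      qed
    qed
    ultimately show "\<exists>A\<in>U. insert None (Some ` A) \<subseteq> {y \<in> topspace (filter_space U). column_map y \<inter> W \<noteq> {}}"
      by blast
  qed
qed

lemma (in free_ultrafilter) not_selective_filter_space_gap_space:
  assumes avoid: "\<And>k. \<exists>a\<in>Field omega1. B a \<inter> grid_column k = {}"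
    and large: "\<And>a. a \<in> Field omega1 \<Longrightarrow> large_columns (B a) \<and> column_finite (B a)"
    and chain: "\<And>a b. a \<in> Field omega1 \<Longrightarrow> b \<in> underS omega1 a \<Longrightarrow> almost_subset (B a) (B b)"
    and kill: "\<And>f. \<exists>a\<in>Field omega1. {n. cell n (f n) \<in> B a} \<notin> U"
  shows "\<not> selective (filter_space U) (gap_space B)"
proof
  assume "selective (filter_space U) (gap_space B)"
  then obtain s where s: "continuous_map (filter_space U) (gap_space B) s" "\<And>y. s y \<in> column_map y"
    using lsc_column_map[OF avoid large chain] unfolding selective_def by auto
  \<comment> \<open>a selection of the column map is the graph of a function f\<close>
  define f where "f n = row_of (the (s (Some n)))" for n
  have s_Some: "s (Some n) = Some (cell n (f n))" for n
    using s(2)[of "Some n"] unfolding column_map_def f_def by auto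
  have "s None = None" using s(2)[of None] unfolding column_map_def by simp
  obtain a where a: "a \<in> Field omega1" "{n. cell n (f n) \<in> B a} \<notin> U" using kill by blast
  have "openin (filter_space U) (s -` gap_nbhd B {a})"
    using s(1) openin_gap_nbhd[OF basic_index_singleton[OF a(1)]]
    unfolding continuous_map_UNIV[OF topspace_gap_space topspace_filter_space_U] by blast
  moreover have "None \<in> s -` gap_nbhd B {a}" using \<open>s None = None\<close> by simp
  ultimately obtain A where A: "A \<in> U" "insert None (Some ` A) \<subseteq> s -` gap_nbhd B {a}"
    unfolding openin_filter_space_U by blast
  have "A \<subseteq> {n. cell n (f n) \<in> B a}" using A(2) s_Some by auto
  thus False using a(2) A(1) superset_in by blast
qed

section \<open>The gap space is selective for the convergent sequence\<close>

lemma lsc_conv_seq_cofinite: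
  assumes L: "lsc conv_seq X \<phi>" and W: "openin X W" "\<phi> None \<inter> W \<noteq> {}"
  shows "\<exists>A. finite (- A) \<and> (\<forall>n\<in>A. \<phi> (Some n) \<inter> W \<noteq> {})"
proof -
  have "openin conv_seq {y. \<phi> y \<inter> W \<noteq> {}}" using L W(1) unfolding lsc_def by simp
  then obtain A where "finite (- A)" "insert None (Some ` A) \<subseteq> {y. \<phi> y \<inter> W \<noteq> {}}"
    using W(2) unfolding openin_conv_seq by blast
  thus ?thesis by blast
qed

lemma continuous_map_conv_seqI:
  assumes X: "topspace X = UNIV"
    and cont: "\<And>V. openin X V \<Longrightarrow> s None \<in> V \<Longrightarrow> \<exists>A. finite (- A) \<and> (\<forall>n\<in>A. s (Some n) \<in> V)"
  shows "continuous_map conv_seq X s"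
  unfolding continuous_map_UNIV[OF X topspace_conv_seq]
proof (intro allI impI)
  fix V assume V: "openin X V"
  show "openin conv_seq (s -` V)" unfolding openin_conv_seq
  proof
    assume "None \<in> s -` V"
    then obtain A where "finite (- A)" "\<forall>n\<in>A. s (Some n) \<in> V" using cont[OF V] by auto
    thus "\<exists>A. finite (- A) \<and> insert None (Some ` A) \<subseteq> s -` V"
      using \<open>None \<in> s -` V\<close> by (intro exI[of _ A]) auto
  qed
qed

lemma lsc_conv_seq_nonempty: "lsc conv_seq X \<phi> \<Longrightarrow> \<phi> y \<noteq> {}"
  unfolding lsc_def by simp

lemma selection_through_point:
  assumes L: "lsc conv_seq (gap_space B) \<phi>" and k: "Some k \<in> \<phi> None"
  shows "\<exists>s. continuous_map conv_seq (gap_space B) s \<and> (\<forall>y. s y \<in> \<phi> y)"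
proof -
  define s where "s y = (if Some k \<in> \<phi> y then Some k else (SOME z. z \<in> \<phi> y))" for y
  have "s y \<in> \<phi> y" for y
    using lsc_conv_seq_nonempty[OF L] unfolding s_def by (auto simp: some_in_eq)
  moreover have "continuous_map conv_seq (gap_space B) s"
  proof (rule continuous_map_conv_seqI[OF topspace_gap_space])
    fix V assume V: "openin (gap_space B) V" "s None \<in> V"
    have "openin (gap_space B) {Some k}" unfolding openin_gap_space by blast
    then obtain A where "finite (- A)" "\<forall>n\<in>A. \<phi> (Some n) \<inter> {Some k} \<noteq> {}"
      using lsc_conv_seq_cofinite[OF L] k by blast
    moreover have "s None = Some k" using k unfolding s_def by simp
    ultimately show "\<exists>A. finite (- A) \<and> (\<forall>n\<in>A. s (Some n) \<in> V)"
      using V(2) unfolding s_def by auto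
  qed
  ultimately show ?thesis by blast
qed

lemma lsc_trace_candidate:
  assumes L: "lsc conv_seq (gap_space B) \<phi>" and N: "None \<in> \<phi> None"
    and P: "P \<subseteq> Field omega1" and avoid: "\<forall>k. \<exists>x\<in>P. B x \<inter> grid_column k = {}"
  shows "lsc_candidate P B (\<lambda>n. {k. Some k \<in> \<phi> (Some n)}) {n. None \<notin> \<phi> (Some n)}"
  unfolding lsc_candidate_def
proof (intro conjI allI impI ballI)
  fix n assume "n \<in> {n. None \<notin> \<phi> (Some n)}"
  moreover obtain z where "z \<in> \<phi> (Some n)" using lsc_conv_seq_nonempty[OF L] by blast
  ultimately show "{k. Some k \<in> \<phi> (Some n)} \<noteq> {}" by (cases z) auto
next
  fix F assume F: "finite F \<and> F \<noteq> {} \<and> F \<subseteq> P"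
  hence "basic_index F" using P unfolding basic_index_def by blast
  moreover have "\<phi> None \<inter> gap_nbhd B F \<noteq> {}" using N by auto
  ultimately obtain A where A: "finite (- A)" "\<forall>n\<in>A. \<phi> (Some n) \<inter> gap_nbhd B F \<noteq> {}"
    using lsc_conv_seq_cofinite[OF L openin_gap_nbhd] by blast
  have "{n \<in> {n. None \<notin> \<phi> (Some n)}. {k. Some k \<in> \<phi> (Some n)} \<inter> \<Inter>(B ` F) = {}} \<subseteq> - A"
  proof
    fix n assume n: "n \<in> {n \<in> {n. None \<notin> \<phi> (Some n)}. {k. Some k \<in> \<phi> (Some n)} \<inter> \<Inter>(B ` F) = {}}"
    have "\<phi> (Some n) \<inter> gap_nbhd B F = {}"
    proof (rule equals0I)
      fix z assume z: "z \<in> \<phi> (Some n) \<inter> gap_nbhd B F"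
      thus False using n by (cases z) auto
    qed
    thus "n \<in> - A" using A(2) by blast
  qed
  thus "finite {n \<in> {n. None \<notin> \<phi> (Some n)}. {k. Some k \<in> \<phi> (Some n)} \<inter> \<Inter>(B ` F) = {}}"
    using A(1) finite_subset by blast
qed (use avoid in blast)

lemma not_refuted_by_lsc_trace:
  assumes L: "lsc conv_seq (gap_space B) \<phi>" and N: "None \<in> \<phi> None"
    and P: "P \<subseteq> Field omega1" and a: "a \<in> Field omega1"
  shows "\<not> refuted_by P B (\<lambda>n. {k. Some k \<in> \<phi> (Some n)}) {n. None \<notin> \<phi> (Some n)} (B a)"
proof
  assume "refuted_by P B (\<lambda>n. {k. Some k \<in> \<phi> (Some n)}) {n. None \<notin> \<phi> (Some n)} (B a)"
  then obtain F J where FJ: "finite F" "F \<subseteq> P" "J \<subseteq> {n. None \<notin> \<phi> (Some n)}" "infinite J"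
    "\<forall>n\<in>J. {k. Some k \<in> \<phi> (Some n)} \<inter> B a \<inter> \<Inter>(B ` F) = {}"
    unfolding refuted_by_def by blast
  have "basic_index (insert a F)" using FJ(1,2) P a unfolding basic_index_def by blast
  moreover have "\<phi> None \<inter> gap_nbhd B (insert a F) \<noteq> {}" using N by auto
  ultimately obtain A where A: "finite (- A)" "\<forall>n\<in>A. \<phi> (Some n) \<inter> gap_nbhd B (insert a F) \<noteq> {}"
    using lsc_conv_seq_cofinite[OF L openin_gap_nbhd] by blast
  obtain n where n: "n \<in> J" "n \<in> A" using A(1) FJ(4) by (meson finite_subset subsetI ComplI)
  then obtain z where z: "z \<in> \<phi> (Some n)" "z \<in> gap_nbhd B (insert a F)" using A(2) by blast
  show False
  proof (cases z)
    case None thus False using z(1) n(1) FJ(3) by auto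
  next
    case (Some k) thus False using z FJ(5) n(1) by auto
  qed
qed

lemma selection_from_fto_selection:
  assumes L: "lsc conv_seq (gap_space B) \<phi>" and N: "None \<in> \<phi> None"
    and fto: "fto_selection (\<lambda>n. {k. Some k \<in> \<phi> (Some n)}) {n. None \<notin> \<phi> (Some n)} A'"
    and below: "\<And>F. finite F \<Longrightarrow> F \<subseteq> Field omega1 \<Longrightarrow> almost_subset A' (\<Inter>(B ` F))"
  shows "\<exists>s. continuous_map conv_seq (gap_space B) s \<and> (\<forall>y. s y \<in> \<phi> y)"
proof -
  define M where "M = {n. None \<notin> \<phi> (Some n)}"
  obtain sel where sel: "\<forall>n\<in>M. Some (sel n) \<in> \<phi> (Some n)" "\<forall>x. finite {n\<in>M. sel n = x}" "sel ` M \<subseteq> A'"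
    using fto unfolding fto_selection_def M_def by auto
  define s where "s y = (case y of None \<Rightarrow> None | Some n \<Rightarrow> if n \<in> M then Some (sel n) else None)" for y
  have "s y \<in> \<phi> y" for y
    using N sel(1) unfolding s_def M_def by (cases y) auto
  moreover have "continuous_map conv_seq (gap_space B) s"
  proof (rule continuous_map_conv_seqI[OF topspace_gap_space])
    fix V assume V: "openin (gap_space B) V" "s None \<in> V"
    then obtain F where F: "basic_index F" "gap_nbhd B F \<subseteq> V"
      unfolding openin_gap_space s_def by auto
    define bad where "bad = {n\<in>M. sel n \<notin> \<Inter>(B ` F)}"
    have "bad \<subseteq> (\<Union>x\<in>A' - \<Inter>(B ` F). {n\<in>M. sel n = x})" unfolding bad_def using sel(3) by blast
    moreover have "finite (A' - \<Inter>(B ` F))"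
      using below F(1) unfolding basic_index_def almost_subset_def by blast
    ultimately have "finite bad" using sel(2) finite_subset by blast
    moreover have "s (Some n) \<in> V" if "n \<in> - bad" for n
      using that F(2) V(2) unfolding bad_def s_def by auto
    ultimately show "\<exists>A. finite (- A) \<and> (\<forall>n\<in>A. s (Some n) \<in> V)"
      by (intro exI[of _ "- bad"]) simp
  qed
  ultimately show ?thesis by blast
qed

lemma selective_conv_seq_gap_space:
  assumes AB: "\<And>a b. a \<in> Field omega1 \<Longrightarrow> b \<in> Field omega1 \<Longrightarrow> almost_subset (A a) (B b)"
    and avoid: "\<And>k. \<exists>a\<in>Field omega1. B a \<inter> grid_column k = {}"
    and diagonal: "\<And>psi M g. g \<in> Field omega1 \<Longrightarrow> \<exists>a\<in>Field omega1. g \<in> underS omega1 a \<and>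
      (lsc_candidate (underS omega1 a) B psi M \<longrightarrow>
        fto_selection psi M (A a) \<or> refuted_by (underS omega1 a) B psi M (B a))"
  shows "selective conv_seq (gap_space B)"
  unfolding selective_def
proof (intro allI impI)
  fix \<phi> :: "nat option \<Rightarrow> nat option set"
  assume L: "lsc conv_seq (gap_space B) \<phi>"
  show "\<exists>s. continuous_map conv_seq (gap_space B) s \<and> (\<forall>y\<in>topspace conv_seq. s y \<in> \<phi> y)"
  proof (cases "\<exists>k. Some k \<in> \<phi> None")
    case True
    thus ?thesis using selection_through_point[OF L] by blast
  next
    case False
    have N: "None \<in> \<phi> None"
      using lsc_conv_seq_nonempty[OF L, of None] False by (metis ex_in_conv not_None_eq)
    define psi where "psi n = {k. Some k \<in> \<phi> (Some n)}" for n
    define M where "M = {n. None \<notin> \<phi> (Some n)}"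
    have "\<forall>k. \<exists>a. a \<in> Field omega1 \<and> B a \<inter> grid_column k = {}" using avoid by blast
    from choice[OF this] obtain r where r: "\<And>k. r k \<in> Field omega1 \<and> B (r k) \<inter> grid_column k = {}"
      by blast
    obtain g where g: "g \<in> Field omega1" "range r \<subseteq> underS omega1 g"
      using countable_subset_underS_omega1[of "range r"] r by blast
    obtain a where a: "a \<in> Field omega1" "g \<in> underS omega1 a"
      "lsc_candidate (underS omega1 a) B psi M \<longrightarrow>
        fto_selection psi M (A a) \<or> refuted_by (underS omega1 a) B psi M (B a)"
      using diagonal[OF g(1)] by blast
    have "\<forall>k. \<exists>x\<in>underS omega1 a. B x \<inter> grid_column k = {}"
      using r g(2) a(2) underS_omega1_trans by blast
    hence "lsc_candidate (underS omega1 a) B psi M"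
      unfolding psi_def M_def using lsc_trace_candidate[OF L N underS_omega1_subset_Field] by blast
    moreover have "\<not> refuted_by (underS omega1 a) B psi M (B a)"
      unfolding psi_def M_def using not_refuted_by_lsc_trace[OF L N underS_omega1_subset_Field a(1)] .
    ultimately have "fto_selection psi M (A a)" using a(3) by blast
    moreover have "almost_subset (A a) (\<Inter>(B ` F))" if "finite F" "F \<subseteq> Field omega1" for F
      using almost_subset_Inter_finite[of "B ` F" "A a"] that AB[OF a(1)] by blast
    ultimately obtain s where "continuous_map conv_seq (gap_space B) s" "\<forall>y. s y \<in> \<phi> y"
      using selection_from_fto_selection[OF L N] unfolding psi_def M_def by blast
    thus ?thesis by blast
  qed
qed

section \<open>The construction under CH\<close>

definition decode_candidate :: "nat set \<Rightarrow> (nat \<Rightarrow> nat set) \<times> nat set" where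
  "decode_candidate S = ((\<lambda>n. {k. cell 1 (cell n k) \<in> S}), {n. cell 0 n \<in> S})"

definition decode_nat :: "nat set \<Rightarrow> nat" where
  "decode_nat S = (LEAST k. k \<in> S)"

lemma decode_nat_singleton: "decode_nat {k} = k"
  unfolding decode_nat_def by (rule Least_equality) auto

lemma uncountable_UNIV_nat_set: "\<not> countable (UNIV :: nat set set)"
proof
  assume "countable (UNIV :: nat set set)"
  hence "range (from_nat_into (UNIV :: nat set set)) = UNIV" by (simp add: range_from_nat_into)
  then obtain m where "from_nat_into UNIV m = {n. n \<notin> from_nat_into (UNIV :: nat set set) n}"
    by (metis UNIV_I imageE)
  thus False by blast
qed

lemma uncountable_codes: "\<not> countable {S. decode_candidate S = (psi, M)}"
proof
  define code where "code T = {cell 1 (cell n k) | n k. k \<in> psi n} \<union> {cell 0 n | n. n \<in> M} \<union>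
    {cell 2 t | t. t \<in> T}" for T
  have "decode_candidate (code T) = (psi, M)" for T
    unfolding decode_candidate_def code_def by auto
  moreover have "inj code"
  proof (rule injI)
    fix T1 T2 assume "code T1 = code T2"
    moreover have "t \<in> T \<longleftrightarrow> cell 2 t \<in> code T" for t T unfolding code_def by auto
    ultimately show "T1 = T2" by blast
  qed
  moreover assume "countable {S. decode_candidate S = (psi, M)}"
  ultimately have "countable (range code)" by (metis (mono_tags) countable_subset image_subsetI mem_Collect_eq)
  hence "countable (UNIV :: nat set set)" using \<open>inj code\<close> countable_image_inj_on by blast
  thus False using uncountable_UNIV_nat_set by blast
qed

lemma unbounded_codes:
  assumes e: "bij_betw e (Field omega1) (UNIV :: nat set set)" and g: "g \<in> Field omega1"
  shows "\<exists>a\<in>Field omega1. g \<in> underS omega1 a \<and> decode_candidate (e a) = (psi, M)"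
proof -
  define codes where "codes = {a\<in>Field omega1. decode_candidate (e a) = (psi, M)}"
  have codes: "{S. decode_candidate S = (psi, M)} \<subseteq> e ` codes"
  proof
    fix S assume S: "S \<in> {S. decode_candidate S = (psi, M)}"
    obtain a where "a \<in> Field omega1" "e a = S" using e unfolding bij_betw_def by (metis UNIV_I imageE)
    thus "S \<in> e ` codes" using S unfolding codes_def by blast
  qed
  have "\<not> countable codes"
  proof
    assume "countable codes"
    hence "countable (e ` codes)" by simp
    thus False using uncountable_codes[of psi M] countable_subset[OF codes] by blast
  qed
  moreover have "countable (insert g (underS omega1 g))" using countable_underS_omega1[OF g] by simp
  ultimately have "\<not> codes \<subseteq> insert g (underS omega1 g)" using countable_subset[of codes] by blast
  then obtain a where a: "a \<in> codes" "a \<notin> insert g (underS omega1 g)" by blast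
  hence "g \<in> underS omega1 a" using omega1_cases[OF _ g, of a] unfolding codes_def by blast
  thus ?thesis using a(1) unfolding codes_def by blast
qed

lemma Inter_image_cong: "\<forall>x\<in>P. B x = B' x \<Longrightarrow> F \<subseteq> P \<Longrightarrow> \<Inter>(B ` F) = \<Inter>(B' ` F)"
  by (metis image_cong subsetD)

lemma lsc_candidate_cong:
  assumes eq: "\<forall>x\<in>P. B x = B' x"
  shows "lsc_candidate P B psi M = lsc_candidate P B' psi M"
proof -
  have "(\<forall>F. finite F \<and> F \<noteq> {} \<and> F \<subseteq> P \<longrightarrow> finite {n\<in>M. psi n \<inter> \<Inter>(B ` F) = {}}) =
        (\<forall>F. finite F \<and> F \<noteq> {} \<and> F \<subseteq> P \<longrightarrow> finite {n\<in>M. psi n \<inter> \<Inter>(B' ` F) = {}})"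
    using Inter_image_cong[OF eq] by (intro iff_allI imp_cong[OF refl]) simp
  moreover have "(\<forall>k. \<exists>x\<in>P. B x \<inter> grid_column k = {}) = (\<forall>k. \<exists>x\<in>P. B' x \<inter> grid_column k = {})"
    using eq by auto
  ultimately show ?thesis unfolding lsc_candidate_def by simp
qed

lemma refuted_by_cong:
  assumes eq: "\<forall>x\<in>P. B x = B' x"
  shows "refuted_by P B psi M B'' = refuted_by P B' psi M B''"
proof -
  have "(finite F \<and> F \<subseteq> P \<and> J \<subseteq> M \<and> infinite J \<and> (\<forall>n\<in>J. psi n \<inter> B'' \<inter> \<Inter>(B ` F) = {})) =
        (finite F \<and> F \<subseteq> P \<and> J \<subseteq> M \<and> infinite J \<and> (\<forall>n\<in>J. psi n \<inter> B'' \<inter> \<Inter>(B' ` F) = {}))" for F J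
  proof (cases "F \<subseteq> P")
    case True thus ?thesis using Inter_image_cong[OF eq True] by simp
  qed simp
  thus ?thesis unfolding refuted_by_def by simp
qed

context gap_parameters
begin

lemma next_stage_cong:
  assumes "\<forall>x\<in>P. A x = A' x" "\<forall>x\<in>P. B x = B' x"
  shows "next_stage P A B E f psi M c A'' B'' = next_stage P A' B' E f psi M c A'' B''"
proof -
  have "(\<forall>x\<in>P. almost_subset (A x) A'' \<and> almost_subset A'' (B x) \<and> almost_subset B'' (B x)) =
        (\<forall>x\<in>P. almost_subset (A' x) A'' \<and> almost_subset A'' (B' x) \<and> almost_subset B'' (B' x))"
    "(\<forall>x\<in>P. almost_subset E (B x)) = (\<forall>x\<in>P. almost_subset E (B' x))"
    using assms by auto
  thus ?thesis
    unfolding next_stage_def using lsc_candidate_cong[OF assms(2)] refuted_by_cong[OF assms(2)] by simp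
qed

text \<open>At stage a the set e a is read at once as the set E to be settled, as the function to be
  killed, as a candidate map and as the column to be avoided.\<close>

definition stage_at :: "(nat set \<Rightarrow> nat set) \<Rightarrow> (nat set \<Rightarrow> nat set) \<Rightarrow> (nat set \<Rightarrow> nat set) \<Rightarrow>
    nat set \<Rightarrow> nat set \<Rightarrow> nat set \<Rightarrow> bool" where
  "stage_at e A B a A' B' \<longleftrightarrow> next_stage (underS omega1 a) A B (e a) (decode_fun (e a))
     (fst (decode_candidate (e a))) (snd (decode_candidate (e a))) (decode_nat (e a)) A' B'"

lemma stage_at_cong:
  "\<forall>x\<in>underS omega1 a. A x = A' x \<Longrightarrow> \<forall>x\<in>underS omega1 a. B x = B' x \<Longrightarrow>
    stage_at e A B a A'' B'' = stage_at e A' B' a A'' B''"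
  unfolding stage_at_def by (rule next_stage_cong)

lemma good_history_of_stages:
  assumes a: "a \<in> Field omega1" and stages: "\<forall>x\<in>underS omega1 a. stage_at e A B x (A x) (B x)"
  shows "good_history (underS omega1 a) A B"
proof -
  have inv: "stage_inv (A x) (B x)" if "x \<in> underS omega1 a" for x
    using stages that unfolding stage_at_def next_stage_def by blast
  have below: "almost_subset (A y) (A x) \<and> almost_subset (A x) (B y) \<and> almost_subset (B x) (B y)"
    if "x \<in> underS omega1 a" "y \<in> underS omega1 x" for x y
    using stages that unfolding stage_at_def next_stage_def by blast
  have cases: "x = y \<or> x \<in> underS omega1 y \<or> y \<in> underS omega1 x"
    if "x \<in> underS omega1 a" "y \<in> underS omega1 a" for x y
    using omega1_cases that underS_omega1_subset_Field by blast
  have "almost_subset (A x) (B y)" if xy: "x \<in> underS omega1 a" "y \<in> underS omega1 a" for x y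
    using cases[OF xy] inv[OF xy(1)] inv[OF xy(2)] below[OF xy(2)] below[OF xy(1)] almost_subset_trans
    unfolding stage_inv_def by blast
  moreover have "almost_chain (B ` underS omega1 a)"
    unfolding almost_chain_def using cases below by fastforce
  ultimately show ?thesis
    unfolding good_history_def using countable_underS_omega1[OF a] inv by blast
qed

lemma stages_exist: "\<exists>A B. \<forall>a\<in>Field omega1. stage_at e A B a (A a) (B a)"
proof -
  have "\<exists>h. \<forall>a\<in>Field omega1. stage_at e (fst \<circ> h) (snd \<circ> h) a (fst (h a)) (snd (h a))"
  proof (rule omega1_recursion)
    fix h h' :: "nat set \<Rightarrow> nat set \<times> nat set" and a v
    assume "\<forall>x\<in>underS omega1 a. h x = h' x"
    thus "stage_at e (fst \<circ> h) (snd \<circ> h) a (fst v) (snd v) = stage_at e (fst \<circ> h') (snd \<circ> h') a (fst v) (snd v)"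
      by (intro stage_at_cong) auto
  next
    fix h :: "nat set \<Rightarrow> nat set \<times> nat set" and a
    assume "a \<in> Field omega1" "\<forall>x\<in>underS omega1 a. stage_at e (fst \<circ> h) (snd \<circ> h) x (fst (h x)) (snd (h x))"
    hence "good_history (underS omega1 a) (fst \<circ> h) (snd \<circ> h)"
      using good_history_of_stages by simp
    then obtain A' B' where "stage_at e (fst \<circ> h) (snd \<circ> h) a A' B'"
      unfolding stage_at_def using next_stage_exists by blast
    thus "\<exists>v. stage_at e (fst \<circ> h) (snd \<circ> h) a (fst v) (snd v)" by (intro exI[of _ "(A', B')"]) simp
  qed
  thus ?thesis by (metis comp_apply)
qed

end

locale gap_tower = gap_parameters +
  fixes e :: "nat set \<Rightarrow> nat set" and A B :: "nat set \<Rightarrow> nat set"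
  assumes e_bij: "bij_betw e (Field omega1) (UNIV :: nat set set)"
    and stages: "\<And>a. a \<in> Field omega1 \<Longrightarrow> stage_at e A B a (A a) (B a)"
begin

lemma e_onto: "\<exists>a\<in>Field omega1. e a = S"
  using e_bij unfolding bij_betw_def by (metis UNIV_I imageE)

lemma stage_inv_A_B: "a \<in> Field omega1 \<Longrightarrow> stage_inv (A a) (B a)"
  using stages unfolding stage_at_def next_stage_def by blast

lemma stage_below:
  "a \<in> Field omega1 \<Longrightarrow> x \<in> underS omega1 a \<Longrightarrow>
    almost_subset (A x) (A a) \<and> almost_subset (A a) (B x) \<and> almost_subset (B a) (B x)"
  using stages unfolding stage_at_def next_stage_def by blast

lemma A_almost_subset_B:
  assumes "a \<in> Field omega1" "b \<in> Field omega1"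
  shows "almost_subset (A a) (B b)"
  using omega1_cases[OF assms] stage_inv_A_B[OF assms(2)] stage_below[OF assms(2)] stage_below[OF assms(1)]
    almost_subset_trans unfolding stage_inv_def by blast

lemma columns_avoided: "\<exists>a\<in>Field omega1. B a \<inter> grid_column k = {}"
proof -
  obtain a where "a \<in> Field omega1" "e a = {k}" using e_onto by blast
  thus ?thesis using stages[of a] decode_nat_singleton unfolding stage_at_def next_stage_def by auto
qed

lemma tight_gap_A_B: "tight_gap A B"
  unfolding tight_gap_def
proof (intro conjI ballI allI impI)
  fix a assume a: "a \<in> Field omega1"
  have "infinite (A a)"
    using stage_inv_A_B[OF a] infinite_bottom_row[OF infinite_Q] almost_subset_infinite
    unfolding stage_inv_def by blast
  thus "infinite (A a)" "infinite (B a)"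
    using stage_inv_A_B[OF a] almost_subset_infinite unfolding stage_inv_def by blast+
next
  fix a b assume "a \<in> Field omega1" "b \<in> Field omega1" "olt a b"
  thus "almost_subset (A a) (A b)" "almost_subset (B b) (B a)" "almost_subset (A b) (B a)"
    using stage_below[of b a] unfolding underS_def by blast+
next
  fix E assume E: "\<forall>a\<in>Field omega1. almost_subset E (B a)"
  obtain a where a: "a \<in> Field omega1" "e a = E" using e_onto by blast
  have "almost_subset E grid_triangle"
    using E a(1) stage_inv_A_B[OF a(1)] almost_subset_subset_right unfolding stage_inv_def by blast
  hence "almost_subset E (A a) \<or> \<not> almost_subset E (B a)"
    using stages[OF a(1)] E a underS_omega1_subset_Field unfolding stage_at_def next_stage_def by blast
  thus "\<exists>b\<in>Field omega1. almost_subset E (A b)" using E a(1) by blast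
next
  fix E assume E: "\<forall>a\<in>Field omega1. almost_subset (A a) E"
  obtain a where a: "a \<in> Field omega1" "e a = E" using e_onto by blast
  hence "almost_subset (B a) E \<or> \<not> almost_subset (A a) E"
    using stages[OF a(1)] unfolding stage_at_def next_stage_def by blast
  thus "\<exists>b\<in>Field omega1. almost_subset (B b) E" using E a(1) by blast
qed

lemma not_U_selective: "\<not> selective (filter_space U) (gap_space B)"
proof (rule not_selective_filter_space_gap_space[OF columns_avoided])
  fix a assume a: "a \<in> Field omega1"
  thus "large_columns (B a) \<and> column_finite (B a)"
    using stage_inv_A_B[OF a] column_finite_subset column_finite_grid_triangle unfolding stage_inv_def by blast
next
  fix a b assume "a \<in> Field omega1" "b \<in> underS omega1 a"
  thus "almost_subset (B a) (B b)" using stage_below by blast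
next
  fix f :: "nat \<Rightarrow> nat"
  obtain a where a: "a \<in> Field omega1" "e a = {cell n (f n) | n. True}" using e_onto by blast
  hence "{n. cell n (f n) \<in> B a} \<notin> U"
    using stages[OF a(1)] decode_fun_graph[of f] unfolding stage_at_def next_stage_def by auto
  thus "\<exists>a\<in>Field omega1. {n. cell n (f n) \<in> B a} \<notin> U" using a(1) by blast
qed

lemma L_selective: "selective conv_seq (gap_space B)"
proof (rule selective_conv_seq_gap_space[OF A_almost_subset_B columns_avoided])
  fix psi M g assume "g \<in> Field omega1"
  then obtain a where a: "a \<in> Field omega1" "g \<in> underS omega1 a" "decode_candidate (e a) = (psi, M)"
    using unbounded_codes[OF e_bij] by blast
  thus "\<exists>a\<in>Field omega1. g \<in> underS omega1 a \<and> (lsc_candidate (underS omega1 a) B psi M \<longrightarrow>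
      fto_selection psi M (A a) \<or> refuted_by (underS omega1 a) B psi M (B a))"
    using stages[OF a(1)] unfolding stage_at_def next_stage_def by auto
qed

end

theorem mainTheorem8:
  assumes "CH"
  shows "\<exists>U A B. P_point U \<and> tight_gap A B \<and>
           selective conv_seq (gap_space B) \<and> \<not> selective (filter_space U) (gap_space B)"
proof -
  obtain U where U: "P_point U" using P_point_exists[OF assms] by blast
  then interpret p_point U by unfold_locales
  obtain Q where "Q \<notin> U" "infinite Q" using infinite_subset_notin[of UNIV] by blast
  then interpret gap_parameters U Q by unfold_locales
  obtain e where e: "bij_betw e (Field omega1) (UNIV :: nat set set)"
    using CH_imp_bij_omega1[OF assms] by blast
  obtain A B where "\<forall>a\<in>Field omega1. stage_at e A B a (A a) (B a)" using stages_exist by blast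
  then interpret gap_tower U Q e A B using e by unfold_locales blast+
  show ?thesis using U tight_gap_A_B L_selective not_U_selective by blast
qed

end
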